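(* Fix $k,d\in\mathbb{N}=\{1,2,\dots\}$ and a real number $\alpha>2$. Let $G$ be a graph with $\operatorname{tw}(G)\leq k-1$ and $\Delta(G)\leq d$. Then $G$ has a tree-partition $(B_x:x\in V(T))$ of width at most $\frac{3\alpha(\alpha-1)}{\alpha-2}kd-\frac{\alpha}{\alpha-2}k$ such that $\Delta(T)\leq \frac{3\alpha}{\alpha-2}d+\frac{\alpha-4}{\alpha-2}$. Moreover, for any set $S\subseteq V(G)$ with $\alpha k\leq |S|\leq 3\alpha kd$, there exists a tree-partition $(B_x:x\in V(T))$ of $G$ of width at most $\frac{3\alpha(\alpha-1)}{\alpha-2}kd-\frac{\alpha}{\alpha-2}k$ such that $\Delta(T)\leq \frac{3\alpha}{\alpha-2}d+\frac{\alpha-4}{\alpha-2}$ and there exists a node $z\in V(T)$ such that: $S\subseteq B_z$; $|B_z|\leq \frac{\alpha-1}{\alpha-2}|S|-\frac{\alpha}{\alpha-2}k$; and $\deg_T(z)\leq \frac{1}{(\alpha-2)k}|S|-\frac{2}{\alpha-2}$.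
   Context: All graphs are finite and simple. $\Delta(G)$ denotes the maximum degree of $G$, and $\operatorname{tw}(G)$ its treewidth. For a graph $G$ and a tree $T$, a $T$-partition of $G$ is a family $(B_x : x\in V(T))$ of pairwise disjoint subsets of $V(G)$ (some possibly empty) with union $V(G)$, indexed by the nodes of $T$, such that for every edge $vw$ of $G$, if $v\in B_x$ and $w\in B_y$ then $x=y$ or $xy\in E(T)$. A tree-partition of $G$ is a $T$-partition for some tree $T$. The width of a $T$-partition is $\max\{|B_x| : x\in V(T)\}$. *)

theory Defs
  imports Complex_Main
begin

definition sgraph :: "'a set \<Rightarrow> 'a set set \<Rightarrow> bool" where
  "sgraph V E \<longleftrightarrow> finite V \<and> (\<forall>e\<in>E. \<exists>u v. u \<in> V \<and> v \<in> V \<and> u \<noteq> v \<and> e = {u, v})"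

definition degree :: "'a set set \<Rightarrow> 'a \<Rightarrow> nat" where
  "degree E v = card {u. {v, u} \<in> E}"

definition max_degree_le :: "'a set \<Rightarrow> 'a set set \<Rightarrow> real \<Rightarrow> bool" where
  "max_degree_le V E D \<longleftrightarrow> (\<forall>v\<in>V. real (degree E v) \<le> D)"

definition connected_in :: "'a set set \<Rightarrow> 'a set \<Rightarrow> bool" where
  "connected_in E S \<longleftrightarrow>
     (\<forall>x\<in>S. \<forall>y\<in>S. (x, y) \<in> {(u, w). u \<in> S \<and> w \<in> S \<and> {u, w} \<in> E}\<^sup>*)"

definition is_cycle :: "'a set set \<Rightarrow> 'a list \<Rightarrow> bool" where
  "is_cycle E cs \<longleftrightarrow> length cs \<ge> 3 \<and> distinct cs \<and>
     (\<forall>i. Suc i < length cs \<longrightarrow> {cs ! i, cs ! Suc i} \<in> E) \<and> {last cs, hd cs} \<in> E"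

definition is_tree :: "'b set \<Rightarrow> 'b set set \<Rightarrow> bool" where
  "is_tree VT ET \<longleftrightarrow> sgraph VT ET \<and> VT \<noteq> {} \<and> connected_in ET VT \<and> (\<nexists>cs. is_cycle ET cs)"

definition tree_decomposition :: "'a set \<Rightarrow> 'a set set \<Rightarrow> 'b set \<Rightarrow> 'b set set \<Rightarrow> ('b \<Rightarrow> 'a set) \<Rightarrow> bool" where
  "tree_decomposition V E VT ET W \<longleftrightarrow> is_tree VT ET \<and>
     (\<forall>x\<in>VT. W x \<subseteq> V) \<and>
     (\<forall>v\<in>V. \<exists>x\<in>VT. v \<in> W x) \<and>
     (\<forall>e\<in>E. \<exists>x\<in>VT. e \<subseteq> W x) \<and>
     (\<forall>v\<in>V. connected_in ET {x\<in>VT. v \<in> W x})"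

definition treewidth_le :: "'a set \<Rightarrow> 'a set set \<Rightarrow> nat \<Rightarrow> bool" where
  "treewidth_le V E w \<longleftrightarrow>
     (\<exists>(VT :: nat set) ET W. tree_decomposition V E VT ET W \<and> (\<forall>x\<in>VT. card (W x) \<le> w + 1))"

definition T_partition :: "'a set \<Rightarrow> 'a set set \<Rightarrow> 'b set \<Rightarrow> 'b set set \<Rightarrow> ('b \<Rightarrow> 'a set) \<Rightarrow> bool" where
  "T_partition V E VT ET B \<longleftrightarrow>
     (\<forall>x\<in>VT. \<forall>y\<in>VT. x \<noteq> y \<longrightarrow> B x \<inter> B y = {}) \<and>
     (\<Union>x\<in>VT. B x) = V \<and>
     (\<forall>v w x y. {v, w} \<in> E \<and> x \<in> VT \<and> y \<in> VT \<and> v \<in> B x \<and> w \<in> B y \<longrightarrow> x = y \<or> {x, y} \<in> ET)"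

definition tree_partition :: "'a set \<Rightarrow> 'a set set \<Rightarrow> 'b set \<Rightarrow> 'b set set \<Rightarrow> ('b \<Rightarrow> 'a set) \<Rightarrow> bool" where
  "tree_partition V E VT ET B \<longleftrightarrow> is_tree VT ET \<and> T_partition V E VT ET B"

definition width_le :: "'b set \<Rightarrow> ('b \<Rightarrow> 'a set) \<Rightarrow> real \<Rightarrow> bool" where
  "width_le VT B w \<longleftrightarrow> (\<forall>x\<in>VT. real (card (B x)) \<le> w)"

end

theory Submission
  imports Defs
begin

definition adj :: "'b set set \<Rightarrow> 'b set \<Rightarrow> ('b \<times> 'b) set" where
  "adj E U = {(u, w). u \<in> U \<and> w \<in> U \<and> {u, w} \<in> E}"

lemma connected_in_adj: "connected_in E S \<longleftrightarrow> (\<forall>x\<in>S. \<forall>y\<in>S. (x, y) \<in> (adj E S)\<^sup>*)"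
  unfolding connected_in_def adj_def by simp

lemma converse_adj [simp]: "(adj E U)\<inverse> = adj E U"
  unfolding adj_def by (auto simp: insert_commute)

lemma rtrancl_adj_sym: "(a, b) \<in> (adj E U)\<^sup>* \<Longrightarrow> (b, a) \<in> (adj E U)\<^sup>*"
  by (metis converse_adj rtrancl_converseI)

lemma adj_mono: "E \<subseteq> E' \<Longrightarrow> U \<subseteq> U' \<Longrightarrow> adj E U \<subseteq> adj E' U'"
  unfolding adj_def by auto

lemma rtrancl_adj_mono: "E \<subseteq> E' \<Longrightarrow> U \<subseteq> U' \<Longrightarrow> (a, b) \<in> (adj E U)\<^sup>* \<Longrightarrow> (a, b) \<in> (adj E' U')\<^sup>*"
  using rtrancl_mono[OF adj_mono] by blast

lemma rtrancl_adj_in: "(a, b) \<in> (adj E U)\<^sup>* \<Longrightarrow> a \<in> U \<Longrightarrow> b \<in> U"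
  by (induction rule: rtrancl_induct) (auto simp: adj_def)

lemma rtrancl_adj_outside: "(a, b) \<in> (adj E U)\<^sup>* \<Longrightarrow> a \<notin> U \<Longrightarrow> b = a"
  by (induction rule: rtrancl_induct) (auto simp: adj_def)

lemma sgraph_edge_in: "sgraph V E \<Longrightarrow> {a, b} \<in> E \<Longrightarrow> a \<in> V \<and> b \<in> V"
  unfolding sgraph_def by (metis doubleton_eq_iff)

lemma finite_neighbours:
  assumes "sgraph V E" shows "finite {u. {v, u} \<in> E}"
proof (rule finite_subset)
  show "{u. {v, u} \<in> E} \<subseteq> V" using sgraph_edge_in[OF assms] by blast
  show "finite V" using assms unfolding sgraph_def by simp
qed

lemma rtrancl_distinct_path:
  assumes "(a, b) \<in> R\<^sup>*"
  shows "\<exists>p. p \<noteq> [] \<and> hd p = a \<and> last p = b \<and> distinct p \<and>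
     (\<forall>i. Suc i < length p \<longrightarrow> (p ! i, p ! Suc i) \<in> R)"
  using assms
proof (induction rule: rtrancl_induct)
  case base
  show ?case by (intro exI[of _ "[a]"]) auto
next
  case (step y z)
  then obtain p where p: "p \<noteq> []" "hd p = a" "last p = y" "distinct p"
    "\<forall>i. Suc i < length p \<longrightarrow> (p ! i, p ! Suc i) \<in> R" by blast
  show ?case
  proof (cases "z \<in> set p")
    case True
    then obtain j where j: "j < length p" "p ! j = z" by (meson in_set_conv_nth)
    define q where "q = take (Suc j) p"
    have "length q = Suc j" using j unfolding q_def by simp
    then have "last q = q ! j" by (metis diff_Suc_1 last_conv_nth list.size(3) nat.distinct(1))
    then have "last q = z" using j unfolding q_def by simp
    moreover have "q \<noteq> []" "hd q = a" "distinct q" using p(1,2,4) unfolding q_def by (auto simp: hd_take)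
    moreover have "\<forall>i. Suc i < length q \<longrightarrow> (q ! i, q ! Suc i) \<in> R"
      using p(5) unfolding q_def by simp
    ultimately show ?thesis by blast
  next
    case False
    define q where "q = p @ [z]"
    have "\<forall>i. Suc i < length q \<longrightarrow> (q ! i, q ! Suc i) \<in> R"
    proof (intro allI impI)
      fix i assume i: "Suc i < length q"
      show "(q ! i, q ! Suc i) \<in> R"
      proof (cases "Suc i < length p")
        case True
        then show ?thesis using p(5) unfolding q_def by (simp add: nth_append)
      next
        case False
        then have "Suc i = length p" using i unfolding q_def by simp
        then have "i = length p - 1" by simp
        then have "q ! i = y" "q ! Suc i = z"
          using p(1,3) \<open>Suc i = length p\<close> unfolding q_def by (auto simp: nth_append last_conv_nth)
        then show ?thesis using step(2) by simp
      qed
    qed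
    moreover have "q \<noteq> []" "hd q = a" "last q = z" "distinct q"
      using p(1,2,4) False unfolding q_def by auto
    ultimately show ?thesis by blast
  qed
qed

lemma path_rtrancl_adj:
  assumes "p \<noteq> []" "\<forall>i. Suc i < length p \<longrightarrow> {p ! i, p ! Suc i} \<in> E" "set p \<subseteq> U"
  shows "(hd p, last p) \<in> (adj E U)\<^sup>*"
  using assms
proof (induction p)
  case Nil
  then show ?case by simp
next
  case (Cons x p)
  show ?case
  proof (cases "p = []")
    case True
    then show ?thesis by simp
  next
    case False
    have "(hd p, last p) \<in> (adj E U)\<^sup>*"
      using Cons.IH[OF False] Cons.prems by force
    moreover have "{x, hd p} \<in> E"
      using Cons.prems(2)[rule_format, of 0] False by (simp add: hd_conv_nth)
    then have "(x, hd p) \<in> adj E U" using Cons.prems(3) False unfolding adj_def by auto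
    ultimately show ?thesis using False by simp
  qed
qed

lemma tree_bridge:
  assumes T: "is_tree VT ET" and e: "{x, y} \<in> ET" and xy: "x \<noteq> y"
  shows "(x, y) \<notin> (adj (ET - {{x, y}}) VT)\<^sup>*"
proof
  assume "(x, y) \<in> (adj (ET - {{x, y}}) VT)\<^sup>*"
  from rtrancl_distinct_path[OF this] obtain p where p: "p \<noteq> []" "hd p = x" "last p = y" "distinct p"
    and steps: "\<forall>i. Suc i < length p \<longrightarrow> (p ! i, p ! Suc i) \<in> adj (ET - {{x, y}}) VT"
    by (elim exE conjE) (rule that)
  have "length p \<noteq> 1"
  proof
    assume "length p = 1"
    then have "hd p = last p" using p(1) by (simp add: hd_conv_nth last_conv_nth)
    then show False using p xy by simp
  qed
  moreover have "length p \<noteq> 2"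
  proof
    assume l2: "length p = 2"
    then have "p ! 0 = x" "p ! 1 = y" using p(1-3) by (auto simp: hd_conv_nth last_conv_nth)
    moreover have "(p ! 0, p ! Suc 0) \<in> adj (ET - {{x, y}}) VT" using steps l2 by simp
    ultimately show False unfolding adj_def by simp
  qed
  moreover have "length p \<noteq> 0" using p(1) by simp
  ultimately have "length p \<ge> 3" by linarith
  moreover have "\<forall>i. Suc i < length p \<longrightarrow> {p ! i, p ! Suc i} \<in> ET"
    using steps unfolding adj_def by simp
  moreover have "{last p, hd p} \<in> ET" using e p(2,3) by (simp add: insert_commute)
  ultimately have "is_cycle ET p" unfolding is_cycle_def using p(4) by simp
  then show False using T unfolding is_tree_def by blast
qed

lemma no_cycle_if_bridges:
  assumes sg: "sgraph VT ET"
    and bridges: "\<And>u v. {u, v} \<in> ET \<Longrightarrow> u \<noteq> v \<Longrightarrow> (u, v) \<notin> (adj (ET - {{u, v}}) VT)\<^sup>*"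
  shows "\<nexists>cs. is_cycle ET cs"
proof
  assume "\<exists>cs. is_cycle ET cs"
  then obtain cs where "is_cycle ET cs" by blast
  define n where "n = length cs"
  have n3: "n \<ge> 3" and dcs: "distinct cs" and ed: "\<forall>i. Suc i < n \<longrightarrow> {cs ! i, cs ! Suc i} \<in> ET"
    and el: "{last cs, hd cs} \<in> ET"
    using \<open>is_cycle ET cs\<close> unfolding is_cycle_def n_def by auto
  have "cs \<noteq> []" using n3 unfolding n_def by auto
  then have lastn: "last cs = cs ! (n - 1)" and hdn: "hd cs = cs ! 0"
    unfolding n_def by (simp_all add: last_conv_nth hd_conv_nth)
  have uv: "last cs \<noteq> hd cs"
    using n3 nth_eq_iff_index_eq[OF dcs, of "n - 1" 0] \<open>cs \<noteq> []\<close> unfolding lastn hdn n_def by simp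
  have inV: "set cs \<subseteq> VT"
  proof
    fix a assume "a \<in> set cs"
    then obtain i where i: "i < n" "cs ! i = a" by (metis in_set_conv_nth n_def)
    show "a \<in> VT"
    proof (cases "Suc i < n")
      case True
      then have "{cs ! i, cs ! Suc i} \<in> ET" using ed by blast
      then show ?thesis using sgraph_edge_in[OF sg] i by blast
    next
      case False
      then have "i = n - 1" using i by simp
      then have "a = last cs" using i lastn by simp
      then show ?thesis using sgraph_edge_in[OF sg el] by blast
    qed
  qed
  \<comment> \<open>the cycle minus its closing edge still joins the endpoints of that edge\<close>
  have "{cs ! i, cs ! Suc i} \<in> ET - {{last cs, hd cs}}" if i: "Suc i < n" for i
  proof -
    have inj: "cs ! a = cs ! b \<longleftrightarrow> a = b" if "a < n" "b < n" for a b
      using nth_eq_iff_index_eq[OF dcs] that unfolding n_def by blast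
    have "{cs ! i, cs ! Suc i} \<noteq> {cs ! (n - 1), cs ! 0}"
    proof
      assume "{cs ! i, cs ! Suc i} = {cs ! (n - 1), cs ! 0}"
      then have "(cs ! i = cs ! (n - 1) \<and> cs ! Suc i = cs ! 0) \<or> (cs ! i = cs ! 0 \<and> cs ! Suc i = cs ! (n - 1))"
        by (simp add: doubleton_eq_iff)
      then have "(i = n - 1 \<and> Suc i = 0) \<or> (i = 0 \<and> Suc i = n - 1)" using inj i n3 by simp
      then show False using n3 by linarith
    qed
    then show ?thesis using ed i unfolding lastn hdn by auto
  qed
  then have "(hd cs, last cs) \<in> (adj (ET - {{last cs, hd cs}}) VT)\<^sup>*"
    using path_rtrancl_adj[OF \<open>cs \<noteq> []\<close> _ inV] unfolding n_def by blast
  then have "(last cs, hd cs) \<in> (adj (ET - {{last cs, hd cs}}) VT)\<^sup>*" by (rule rtrancl_adj_sym)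
  then show False using bridges[OF el uv] by blast
qed

lemma is_tree_singleton: "is_tree {z} {}"
  unfolding is_tree_def sgraph_def connected_in_adj is_cycle_def by simp

lemma is_tree_edge:
  assumes "a \<noteq> b" shows "is_tree {a, b} {{a, b}}"
proof -
  have sg: "sgraph {a, b} {{a, b}}" unfolding sgraph_def using assms by blast
  have "(a, b) \<in> adj {{a, b}} {a, b}" unfolding adj_def by auto
  then have ab: "(a, b) \<in> (adj {{a, b}} {a, b})\<^sup>*" by (rule r_into_rtrancl)
  have "connected_in {{a, b}} {a, b}"
    unfolding connected_in_adj using ab rtrancl_adj_sym[OF ab] by simp
  moreover have "\<nexists>cs. is_cycle {{a, b}} cs"
  proof (rule no_cycle_if_bridges[OF sg])
    fix u v assume "{u, v} \<in> {{a, b}}" "u \<noteq> v"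
    then have "{{a, b}} - {{u, v}} = {}" by simp
    moreover have "adj {} {a, b} = {}" unfolding adj_def by auto
    ultimately show "(u, v) \<notin> (adj ({{a, b}} - {{u, v}}) {a, b})\<^sup>*" using \<open>u \<noteq> v\<close> by simp
  qed
  ultimately show ?thesis using sg unfolding is_tree_def by simp
qed

lemma bridge_of_glued_tree:
  assumes T1: "is_tree V1 E1" and S2: "sgraph V2 E2" and int: "V1 \<inter> V2 = {z}"
    and e: "{u, v} \<in> E1" and uv: "u \<noteq> v"
  shows "(u, v) \<notin> (adj (E1 \<union> E2 - {{u, v}}) (V1 \<union> V2))\<^sup>*"
proof
  \<comment> \<open>collapsing the second tree onto z maps walks in the union to walks in the first tree\<close>
  define \<pi> where "\<pi> n = (if n \<in> V1 then n else z)" for n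
  have S1: "sgraph V1 E1" using T1 unfolding is_tree_def by simp
  have "(\<pi> u, \<pi> t) \<in> (adj (E1 - {{u, v}}) V1)\<^sup>*"
    if "(u, t) \<in> (adj (E1 \<union> E2 - {{u, v}}) (V1 \<union> V2))\<^sup>*" for t
    using that
  proof (induction rule: rtrancl_induct)
    case base
    then show ?case by simp
  next
    case (step w w')
    have st: "{w, w'} \<in> E1 \<union> E2 - {{u, v}}" using step(2) unfolding adj_def by simp
    show ?case
    proof (cases "{w, w'} \<in> E1")
      case True
      then have "w \<in> V1" "w' \<in> V1" using sgraph_edge_in[OF S1] by auto
      then have "(\<pi> w, \<pi> w') \<in> adj (E1 - {{u, v}}) V1" using st True unfolding adj_def \<pi>_def by simp
      then show ?thesis using step(3) by simp
    next
      case False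
      then have "w \<in> V2" "w' \<in> V2" using st sgraph_edge_in[OF S2] by auto
      then have "\<pi> w = z" "\<pi> w' = z" using int unfolding \<pi>_def by auto
      then show ?thesis using step(3) by simp
    qed
  qed
  moreover assume "(u, v) \<in> (adj (E1 \<union> E2 - {{u, v}}) (V1 \<union> V2))\<^sup>*"
  ultimately have "(\<pi> u, \<pi> v) \<in> (adj (E1 - {{u, v}}) V1)\<^sup>*" by blast
  moreover have "u \<in> V1" "v \<in> V1" using sgraph_edge_in[OF S1 e] by auto
  ultimately have "(u, v) \<in> (adj (E1 - {{u, v}}) V1)\<^sup>*" unfolding \<pi>_def by simp
  then show False using tree_bridge[OF T1 e uv] by simp
qed

lemma is_tree_Un:
  assumes T1: "is_tree V1 E1" and T2: "is_tree V2 E2" and int: "V1 \<inter> V2 = {z}"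
  shows "is_tree (V1 \<union> V2) (E1 \<union> E2)"
proof -
  have S1: "sgraph V1 E1" and S2: "sgraph V2 E2" using T1 T2 unfolding is_tree_def by auto
  have sg: "sgraph (V1 \<union> V2) (E1 \<union> E2)"
    using S1 S2 unfolding sgraph_def by (metis UnE UnI1 UnI2 finite_UnI)
  have "(a, z) \<in> (adj (E1 \<union> E2) (V1 \<union> V2))\<^sup>*" if "a \<in> V1 \<union> V2" for a
  proof -
    have "(a, z) \<in> (adj E1 V1)\<^sup>* \<or> (a, z) \<in> (adj E2 V2)\<^sup>*"
      using that T1 T2 int unfolding is_tree_def connected_in_adj by blast
    then show ?thesis using rtrancl_adj_mono[of E1 "E1 \<union> E2" V1 "V1 \<union> V2"]
        rtrancl_adj_mono[of E2 "E1 \<union> E2" V2 "V1 \<union> V2"] by blast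
  qed
  then have "connected_in (E1 \<union> E2) (V1 \<union> V2)"
    unfolding connected_in_adj by (meson rtrancl_adj_sym rtrancl_trans)
  moreover have "\<nexists>cs. is_cycle (E1 \<union> E2) cs"
  proof (rule no_cycle_if_bridges[OF sg])
    fix u v assume e: "{u, v} \<in> E1 \<union> E2" and uv: "u \<noteq> v"
    show "(u, v) \<notin> (adj (E1 \<union> E2 - {{u, v}}) (V1 \<union> V2))\<^sup>*"
    proof (cases "{u, v} \<in> E1")
      case True
      then show ?thesis using bridge_of_glued_tree[OF T1 S2 int True uv] by simp
    next
      case False
      then have "{u, v} \<in> E2" using e by simp
      from bridge_of_glued_tree[OF T2 S1 _ this uv, of z] int show ?thesis
        by (simp add: Un_commute Int_commute)
    qed
  qed
  moreover have "V1 \<union> V2 \<noteq> {}" using int by auto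
  ultimately show ?thesis using sg unfolding is_tree_def by simp
qed

definition branch :: "'b set \<Rightarrow> 'b set set \<Rightarrow> 'b \<Rightarrow> 'b \<Rightarrow> 'b set" where
  "branch VT ET x t = (adj ET (VT - {x}))\<^sup>* `` {t}"

lemma self_in_branch: "t \<in> branch VT ET x t"
  unfolding branch_def by simp

lemma branch_subset: "t \<in> VT - {x} \<Longrightarrow> branch VT ET x t \<subseteq> VT - {x}"
  unfolding branch_def using rtrancl_adj_in by fastforce

lemma branch_eq:
  assumes "t' \<in> branch VT ET x t"
  shows "branch VT ET x t' = branch VT ET x t"
proof -
  have "(t, t') \<in> (adj ET (VT - {x}))\<^sup>*" "(t', t) \<in> (adj ET (VT - {x}))\<^sup>*"
    using assms rtrancl_adj_sym unfolding branch_def by auto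
  then show ?thesis unfolding branch_def by (meson Image_singleton_iff rtrancl_trans subsetI subset_antisym)
qed

lemma reach_avoiding:
  assumes conn: "connected_in ET VT" and "x \<in> VT" "y \<in> VT" "x \<noteq> y" "w \<in> VT"
  shows "(w, x) \<in> (adj ET (VT - {y}))\<^sup>* \<or> (w, y) \<in> (adj ET (VT - {x}))\<^sup>*"
proof -
  have "(x, w) \<in> (adj ET VT)\<^sup>*" using assms unfolding connected_in_adj by blast
  then show ?thesis
  proof (induction rule: rtrancl_induct)
    case base
    show ?case by simp
  next
    case (step u w)
    have e: "{w, u} \<in> ET" "u \<in> VT" "w \<in> VT" using step(2) unfolding adj_def by (auto simp: insert_commute)
    consider "w = y" | "w = x" | "w \<noteq> x" "w \<noteq> y" by blast
    then show ?case
    proof cases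
      case 3
      from step.IH show ?thesis
      proof
        assume ux: "(u, x) \<in> (adj ET (VT - {y}))\<^sup>*"
        then have "u \<noteq> y" using rtrancl_adj_outside \<open>x \<noteq> y\<close> by fastforce
        then have "(w, u) \<in> adj ET (VT - {y})" using e 3 unfolding adj_def by simp
        then show ?thesis using ux by (blast intro: converse_rtrancl_into_rtrancl)
      next
        assume uy: "(u, y) \<in> (adj ET (VT - {x}))\<^sup>*"
        then have "u \<noteq> x" using rtrancl_adj_outside \<open>x \<noteq> y\<close> by fastforce
        then have "(w, u) \<in> adj ET (VT - {x})" using e 3 unfolding adj_def by simp
        then show ?thesis using uy by (blast intro: converse_rtrancl_into_rtrancl)
      qed
    qed simp_all
  qed
qed

lemma branch_psubset:
  assumes conn: "connected_in ET VT" and x: "x \<in> VT" and y: "y \<in> VT" "x \<noteq> y"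
    and d: "d \<in> VT - {y}" and xd: "x \<notin> branch VT ET y d"
  shows "branch VT ET y d \<subset> branch VT ET x y"
proof -
  have "w \<in> branch VT ET x y" if w: "w \<in> branch VT ET y d" for w
  proof -
    have dw: "(d, w) \<in> (adj ET (VT - {y}))\<^sup>*" using w unfolding branch_def by simp
    have "w \<in> VT" using branch_subset[OF d] w by blast
    moreover have "(w, x) \<notin> (adj ET (VT - {y}))\<^sup>*"
    proof
      assume "(w, x) \<in> (adj ET (VT - {y}))\<^sup>*"
      with dw have "(d, x) \<in> (adj ET (VT - {y}))\<^sup>*" by (rule rtrancl_trans)
      with xd show False unfolding branch_def by simp
    qed
    ultimately have "(w, y) \<in> (adj ET (VT - {x}))\<^sup>*" using reach_avoiding[OF conn x y] by blast
    then have "(y, w) \<in> (adj ET (VT - {x}))\<^sup>*" by (rule rtrancl_adj_sym)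
    then show ?thesis unfolding branch_def by simp
  qed
  moreover have "y \<notin> branch VT ET y d" using branch_subset[OF d] by blast
  moreover have "y \<in> branch VT ET x y" by (rule self_in_branch)
  ultimately show ?thesis by blast
qed

lemma adj_avoiding_subset: "a \<in> e \<Longrightarrow> adj E (U - {a}) \<subseteq> adj (E - {e}) U"
  unfolding adj_def by blast

lemma branches_disjoint:
  assumes T: "is_tree VT ET" and e: "{x, y} \<in> ET" and xy: "x \<noteq> y"
  shows "branch VT ET x y \<inter> branch VT ET y x = {}"
proof (rule ccontr)
  assume "branch VT ET x y \<inter> branch VT ET y x \<noteq> {}"
  then obtain t where "(y, t) \<in> (adj ET (VT - {x}))\<^sup>*" "(x, t) \<in> (adj ET (VT - {y}))\<^sup>*"
    unfolding branch_def by blast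
  then have "(y, t) \<in> (adj (ET - {{x, y}}) VT)\<^sup>*" "(x, t) \<in> (adj (ET - {{x, y}}) VT)\<^sup>*"
    using rtrancl_mono[OF adj_avoiding_subset[of x "{x, y}" ET VT]]
      rtrancl_mono[OF adj_avoiding_subset[of y "{x, y}" ET VT]] by blast+
  then have "(x, y) \<in> (adj (ET - {{x, y}}) VT)\<^sup>*"
    using rtrancl_adj_sym rtrancl_trans by metis
  then show False using tree_bridge[OF T e xy] by simp
qed

lemma branch_via_neighbour:
  assumes conn: "connected_in ET VT" and x: "x \<in> VT" and c: "c \<in> VT - {x}"
  shows "\<exists>y. {x, y} \<in> ET \<and> y \<in> VT - {x} \<and> branch VT ET x c = branch VT ET x y"
proof -
  have "(x, c) \<in> (adj ET VT)\<^sup>*" using conn x c unfolding connected_in_adj by blast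
  then have "c \<noteq> x \<longrightarrow> (\<exists>y. {x, y} \<in> ET \<and> y \<in> VT - {x} \<and> (y, c) \<in> (adj ET (VT - {x}))\<^sup>*)"
  proof (induction rule: rtrancl_induct)
    case (step u w)
    then have e: "{u, w} \<in> ET" "u \<in> VT" "w \<in> VT" unfolding adj_def by auto
    show ?case
    proof (cases "u = x")
      case True
      then show ?thesis using e by auto
    next
      case False
      then obtain y where "{x, y} \<in> ET" "y \<in> VT - {x}" "(y, u) \<in> (adj ET (VT - {x}))\<^sup>*"
        using step.IH by blast
      moreover have "w \<noteq> x \<longrightarrow> (u, w) \<in> adj ET (VT - {x})" using e False unfolding adj_def by simp
      ultimately show ?thesis by (meson rtrancl.rtrancl_into_rtrancl)
    qed
  qed simp
  then obtain y where "{x, y} \<in> ET" "y \<in> VT - {x}" "c \<in> branch VT ET x y"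
    using c unfolding branch_def by blast
  then show ?thesis using branch_eq[of c VT ET x y] by blast
qed

text \<open>Any family of nonempty node sets of a tree has a centroid: a node x such that every
  branch at x wholly contains at most half of the sets. Otherwise pick a heavy branch C at x
  of minimum size and let y be the neighbour of x in C. The heavy branch D at y cannot be the one
  containing x, since C and D would then be disjoint and both hold more than half of the sets;
  so D is a proper subset of C, contradicting minimality.\<close>

lemma tree_centroid:
  fixes N :: "'a \<Rightarrow> 'b set"
  assumes T: "is_tree VT ET" and finS: "finite S" and N: "\<And>v. v \<in> S \<Longrightarrow> N v \<noteq> {}"
  shows "\<exists>x\<in>VT. \<forall>c\<in>VT - {x}. 2 * card {v\<in>S. N v \<subseteq> branch VT ET x c} \<le> card S"
proof (rule ccontr)
  define heavy where "heavy x c \<longleftrightarrow> x \<in> VT \<and> c \<in> VT - {x} \<and>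
    card S < 2 * card {v\<in>S. N v \<subseteq> branch VT ET x c}" for x c
  have conn: "connected_in ET VT" and finVT: "finite VT"
    using T unfolding is_tree_def sgraph_def by auto
  assume "\<not> ?thesis"
  then have all_heavy: "\<exists>c. heavy x c" if "x \<in> VT" for x
    using that unfolding heavy_def by force
  obtain x0 where "x0 \<in> VT" using T unfolding is_tree_def by blast
  then obtain c0 where "heavy x0 c0" using all_heavy by blast
  then obtain x c where hxc: "heavy x c"
    and min: "\<And>y d. heavy y d \<Longrightarrow> card (branch VT ET x c) \<le> card (branch VT ET y d)"
    using ex_has_least_nat[of "\<lambda>(x, c). heavy x c" "(x0, c0)" "\<lambda>(x, c). card (branch VT ET x c)"]
    by auto
  have x: "x \<in> VT" and c: "c \<in> VT - {x}" using hxc unfolding heavy_def by auto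
  obtain y where xy: "{x, y} \<in> ET" and y: "y \<in> VT - {x}" and C: "branch VT ET x c = branch VT ET x y"
    using branch_via_neighbour[OF conn x c] by blast
  have hxy: "heavy x y" using hxc x y unfolding heavy_def C by simp
  obtain d where hyd: "heavy y d" using all_heavy y by blast
  have d: "d \<in> VT - {y}" using hyd unfolding heavy_def by simp
  show False
  proof (cases "x \<in> branch VT ET y d")
    case True
    then have "heavy y x" using hyd branch_eq[OF True] x y unfolding heavy_def by simp
    define A1 where "A1 = {v\<in>S. N v \<subseteq> branch VT ET x y}"
    define A2 where "A2 = {v\<in>S. N v \<subseteq> branch VT ET y x}"
    have "A1 \<inter> A2 = {}"
    proof (intro equalityI subsetI)
      fix v assume "v \<in> A1 \<inter> A2"
      then have "v \<in> S" "N v \<subseteq> branch VT ET x y \<inter> branch VT ET y x" unfolding A1_def A2_def by auto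
      then show "v \<in> {}" using branches_disjoint[OF T xy] N[of v] y by blast
    qed simp
    moreover have "A1 \<subseteq> S" "A2 \<subseteq> S" unfolding A1_def A2_def by auto
    ultimately have "card A1 + card A2 \<le> card S"
      using finS by (metis card_Un_disjoint card_mono finite_subset Un_subset_iff)
    moreover have "card S < 2 * card A1" "card S < 2 * card A2"
      using hxy \<open>heavy y x\<close> unfolding heavy_def A1_def A2_def by auto
    ultimately show False by linarith
  next
    case False
    then have "branch VT ET y d \<subset> branch VT ET x y"
      using branch_psubset[OF conn x _ _ d] y by blast
    moreover have "finite (branch VT ET x y)" using branch_subset[OF y] finVT finite_subset by blast
    ultimately have "card (branch VT ET y d) < card (branch VT ET x c)" unfolding C by (rule psubset_card_mono[rotated])
    then show False using min[OF hyd] by simp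
  qed
qed

lemma greedy_bipartition:
  fixes w :: "'c \<Rightarrow> nat"
  assumes "finite Q" and "\<And>c. c \<in> Q \<Longrightarrow> 3 * w c \<le> s" and "sum w Q \<le> s"
  shows "\<exists>A\<subseteq>Q. 3 * sum w A \<le> 2 * s \<and> 3 * sum w (Q - A) \<le> 2 * s"
  using assms
proof (induction Q rule: finite_induct)
  case (insert c Q)
  then obtain A where A: "A \<subseteq> Q" "3 * sum w A \<le> 2 * s" "3 * sum w (Q - A) \<le> 2 * s" by auto
  have "finite A" using A(1) insert(1) finite_subset by blast
  then have "sum w (Q - A) = sum w Q - sum w A" "sum w A \<le> sum w Q"
    using A(1) insert(1) by (auto simp: sum_diff_nat sum_mono2)
  \<comment> \<open>add c to the lighter side if that keeps it within 2s/3; otherwise the other side stays light\<close>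
  show ?case
  proof (cases "3 * (w c + sum w A) \<le> 2 * s")
    case True
    have "insert c Q - insert c A = Q - A" using insert(2) A(1) by auto
    moreover have "sum w (insert c A) = w c + sum w A"
      using insert(1,2) A(1) finite_subset by (subst sum.insert) auto
    ultimately show ?thesis using True A by (intro exI[of _ "insert c A"]) auto
  next
    case False
    have "sum w (insert c Q - A) = w c + sum w (Q - A)"
      using insert(1,2) A(1) by (subst insert_Diff_if) (auto simp: sum.insert)
    moreover have "3 * w c \<le> s" "w c + sum w Q \<le> s" using insert.prems insert(1,2) by auto
    ultimately show ?thesis using False A \<open>sum w (Q - A) = sum w Q - sum w A\<close> \<open>sum w A \<le> sum w Q\<close>
      by (intro exI[of _ A]) auto
  qed
qed simp

lemma balanced_bipartition:
  fixes w :: "'c \<Rightarrow> nat"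
  assumes Q: "finite Q" and half: "\<And>c. c \<in> Q \<Longrightarrow> 2 * w c \<le> s" and tot: "sum w Q \<le> s"
  shows "\<exists>A\<subseteq>Q. 3 * sum w A \<le> 2 * s \<and> 3 * sum w (Q - A) \<le> 2 * s"
proof (cases "\<exists>c\<in>Q. s < 3 * w c")
  case True
  \<comment> \<open>a single class of weight more than s/3 forms one side\<close>
  then obtain c where c: "c \<in> Q" "s < 3 * w c" by blast
  have "sum w (Q - {c}) = sum w Q - w c" using Q c(1) by (simp add: sum_diff1_nat)
  then show ?thesis using c half[OF c(1)] tot by (intro exI[of _ "{c}"]) auto
next
  case False
  then show ?thesis using greedy_bipartition[OF Q _ tot] by (simp add: not_less)
qed

lemma card_preimage_eq_sum_fibres:
  assumes "finite S" "finite A"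
  shows "card {v\<in>S. f v \<in> A} = (\<Sum>c\<in>A. card {v\<in>S. f v = c})"
proof -
  have "{v\<in>S. f v \<in> A} = (\<Union>c\<in>A. {v\<in>S. f v = c})" by blast
  moreover have "card (\<Union>c\<in>A. {v\<in>S. f v = c}) = (\<Sum>c\<in>A. card {v\<in>S. f v = c})"
    by (rule card_UN_disjoint) (use assms in auto)
  ultimately show ?thesis by simp
qed

lemma branch_of_connected:
  assumes conn: "connected_in ET M" and M: "M \<subseteq> VT - {x}" and t: "t \<in> M"
  shows "(adj ET (VT - {x}))\<^sup>* `` M = branch VT ET x t"
proof
  show "(adj ET (VT - {x}))\<^sup>* `` M \<subseteq> branch VT ET x t"
  proof
    fix s assume "s \<in> (adj ET (VT - {x}))\<^sup>* `` M"
    then obtain t' where t': "t' \<in> M" "(t', s) \<in> (adj ET (VT - {x}))\<^sup>*" by blast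
    have "(t, t') \<in> (adj ET M)\<^sup>*" using conn t t'(1) unfolding connected_in_adj by blast
    then have "(t, t') \<in> (adj ET (VT - {x}))\<^sup>*" by (rule rtrancl_adj_mono[OF order_refl M])
    then have "(t, s) \<in> (adj ET (VT - {x}))\<^sup>*" using t'(2) by (rule rtrancl_trans)
    then show "s \<in> branch VT ET x t" unfolding branch_def by simp
  qed
  show "branch VT ET x t \<subseteq> (adj ET (VT - {x}))\<^sup>* `` M"
    using t unfolding branch_def by blast
qed

text \<open>The separator is the bag of a centroid x of the subtrees N v of the vertices v of S.
  Every vertex outside that bag is assigned the branch at x containing its subtree; adjacent
  vertices share a bag and hence get the same branch, and each branch receives at most half
  of S, so the branches can be split into two sides with at most two thirds of S each.\<close>

lemma balanced_separator:
  fixes W :: "'b \<Rightarrow> 'a set"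
  assumes sg: "sgraph V E" and td: "tree_decomposition V E VT ET W"
    and bags: "\<forall>x\<in>VT. card (W x) \<le> k" and SV: "S \<subseteq> V"
  shows "\<exists>X P Q. X \<subseteq> V \<and> card X \<le> k \<and> P \<union> Q \<union> X = V \<and> P \<inter> Q = {} \<and> P \<inter> X = {} \<and> Q \<inter> X = {}
     \<and> (\<forall>v w. {v, w} \<in> E \<longrightarrow> v \<in> P \<longrightarrow> w \<notin> Q)
     \<and> 3 * card (S \<inter> P) \<le> 2 * card S \<and> 3 * card (S \<inter> Q) \<le> 2 * card S"
proof -
  have T: "is_tree VT ET" and WV: "\<forall>x\<in>VT. W x \<subseteq> V" and cov: "\<forall>v\<in>V. \<exists>x\<in>VT. v \<in> W x"
    and edg: "\<forall>e\<in>E. \<exists>x\<in>VT. e \<subseteq> W x" and con: "\<forall>v\<in>V. connected_in ET {x\<in>VT. v \<in> W x}"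
    using td unfolding tree_decomposition_def by auto
  have "finite V" using sg unfolding sgraph_def by simp
  then have finS: "finite S" using SV by (rule finite_subset[rotated])
  define N where "N v = {t\<in>VT. v \<in> W t}" for v
  have "N v \<noteq> {}" if "v \<in> S" for v using cov SV that unfolding N_def by blast
  then obtain x where x: "x \<in> VT"
    and centre: "\<forall>c\<in>VT - {x}. 2 * card {v\<in>S. N v \<subseteq> branch VT ET x c} \<le> card S"
    using tree_centroid[OF T finS, of N] by blast
  define K where "K v = (adj ET (VT - {x}))\<^sup>* `` N v" for v
  have K: "K v = branch VT ET x t" if v: "v \<in> V - W x" and t: "t \<in> N v" for v t
  proof -
    have "connected_in ET (N v)" using con v unfolding N_def by simp
    moreover have "N v \<subseteq> VT - {x}" using v unfolding N_def by blast
    ultimately show ?thesis using branch_of_connected[OF _ _ t] unfolding K_def by blast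
  qed
  have N_K: "N v \<subseteq> K v" for v unfolding K_def by blast
  define S' where "S' = S - W x"
  define w where "w C = card {v\<in>S'. K v = C}" for C
  have "finite S'" using finS unfolding S'_def by simp
  have half: "2 * w C \<le> card S" if C: "C \<in> K ` S'" for C
  proof -
    obtain v0 where v0: "v0 \<in> S'" "C = K v0" using C by blast
    then obtain t0 where "t0 \<in> N v0" using cov SV unfolding S'_def N_def by blast
    moreover have "v0 \<in> V - W x" using v0 SV unfolding S'_def by blast
    ultimately have t0: "t0 \<in> VT - {x}" and C: "C = branch VT ET x t0"
      using K v0(2) unfolding N_def by auto
    have "{v\<in>S'. K v = C} \<subseteq> {v\<in>S. N v \<subseteq> branch VT ET x t0}" using N_K C unfolding S'_def by blast
    then have "w C \<le> card {v\<in>S. N v \<subseteq> branch VT ET x t0}" unfolding w_def using finS by (simp add: card_mono)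
    moreover have "2 * card {v\<in>S. N v \<subseteq> branch VT ET x t0} \<le> card S" using centre t0 by blast
    ultimately show ?thesis by linarith
  qed
  have sum_w: "sum w A = card {v\<in>S'. K v \<in> A}" if "A \<subseteq> K ` S'" for A
  proof -
    have "finite A" using finite_subset[OF that finite_imageI[OF \<open>finite S'\<close>]] .
    then show ?thesis unfolding w_def by (rule card_preimage_eq_sum_fibres[OF \<open>finite S'\<close>, symmetric])
  qed
  have "{v\<in>S'. K v \<in> K ` S'} = S'" by blast
  then have "sum w (K ` S') = card S'" using sum_w[of "K ` S'"] by simp
  also have "\<dots> \<le> card S" unfolding S'_def using finS by (simp add: card_mono)
  finally have "sum w (K ` S') \<le> card S" .
  from balanced_bipartition[OF finite_imageI[OF \<open>finite S'\<close>] half this]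
  obtain A where A: "A \<subseteq> K ` S'" "3 * sum w A \<le> 2 * card S" "3 * sum w (K ` S' - A) \<le> 2 * card S"
    by blast
  define P where "P = {v\<in>V - W x. K v \<in> A}"
  define Q where "Q = {v\<in>V - W x. K v \<notin> A}"
  have "S \<inter> P = {v\<in>S'. K v \<in> A}" "S \<inter> Q = {v\<in>S'. K v \<in> K ` S' - A}"
    unfolding P_def Q_def S'_def using SV by auto
  then have sides: "3 * card (S \<inter> P) \<le> 2 * card S" "3 * card (S \<inter> Q) \<le> 2 * card S"
    using A sum_w[OF A(1)] sum_w[OF Diff_subset] by simp_all
  have same_branch: "K v = K u" if e: "{v, u} \<in> E" and vu: "v \<in> V - W x" "u \<in> V - W x" for v u
  proof -
    obtain t where "t \<in> VT" "{v, u} \<subseteq> W t" using edg e by blast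
    then have "t \<in> N v" "t \<in> N u" unfolding N_def by auto
    then show ?thesis using K[OF vu(1)] K[OF vu(2)] by simp
  qed
  have no_edge: "\<forall>v u. {v, u} \<in> E \<longrightarrow> v \<in> P \<longrightarrow> u \<notin> Q"
  proof (intro allI impI notI)
    fix v u assume "{v, u} \<in> E" "v \<in> P" "u \<in> Q"
    then have "K v = K u" "K v \<in> A" "K u \<notin> A"
      using same_branch unfolding P_def Q_def by auto
    then show False by simp
  qed
  have "W x \<subseteq> V" "card (W x) \<le> k" using WV bags x by auto
  moreover have "P \<union> Q \<union> W x = V" "P \<inter> Q = {}" "P \<inter> W x = {}" "Q \<inter> W x = {}"
    unfolding P_def Q_def using \<open>W x \<subseteq> V\<close> by auto
  ultimately show ?thesis using sides no_edge
    by (intro exI[where x = "W x"] exI[where x = P] exI[where x = Q]) simp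
qed

definition induce :: "'a set set \<Rightarrow> 'a set \<Rightarrow> 'a set set" where
  "induce E A = {e\<in>E. e \<subseteq> A}"

lemma sgraph_induce:
  assumes sg: "sgraph V E" and AV: "A \<subseteq> V"
  shows "sgraph A (induce E A)"
proof -
  have "finite A" using sg unfolding sgraph_def by (blast intro: finite_subset[OF AV])
  moreover have "\<exists>u v. u \<in> A \<and> v \<in> A \<and> u \<noteq> v \<and> e = {u, v}" if e: "e \<in> induce E A" for e
  proof -
    have "e \<in> E" "e \<subseteq> A" using e unfolding induce_def by auto
    then obtain u v where "u \<noteq> v" "e = {u, v}" using sg unfolding sgraph_def by blast
    then show ?thesis using \<open>e \<subseteq> A\<close> by blast
  qed
  ultimately show ?thesis unfolding sgraph_def by blast
qed

lemma max_degree_le_induce: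
  assumes sg: "sgraph V E" and md: "max_degree_le V E D" and AV: "A \<subseteq> V"
  shows "max_degree_le A (induce E A) D"
  unfolding max_degree_le_def
proof
  fix v assume "v \<in> A"
  have "{u. {v, u} \<in> induce E A} \<subseteq> {u. {v, u} \<in> E}" unfolding induce_def by auto
  then have "degree (induce E A) v \<le> degree E v"
    unfolding degree_def using finite_neighbours[OF sg] by (rule card_mono[rotated])
  then show "real (degree (induce E A) v) \<le> D"
    using md \<open>v \<in> A\<close> AV unfolding max_degree_le_def by force
qed

lemma tree_decomposition_induce:
  assumes td: "tree_decomposition V E VT ET W" and AV: "A \<subseteq> V"
  shows "tree_decomposition A (induce E A) VT ET (\<lambda>x. W x \<inter> A)"
proof -
  have T: "is_tree VT ET" and cov: "\<forall>v\<in>V. \<exists>x\<in>VT. v \<in> W x"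
    and edg: "\<forall>e\<in>E. \<exists>x\<in>VT. e \<subseteq> W x" and con: "\<forall>v\<in>V. connected_in ET {x\<in>VT. v \<in> W x}"
    using td unfolding tree_decomposition_def by auto
  have "connected_in ET {x\<in>VT. v \<in> W x \<inter> A}" if v: "v \<in> A" for v
  proof -
    have "{x\<in>VT. v \<in> W x \<inter> A} = {x\<in>VT. v \<in> W x}" using v by blast
    moreover have "v \<in> V" using v AV by blast
    ultimately show ?thesis using con by simp
  qed
  moreover have "\<exists>x\<in>VT. v \<in> W x \<inter> A" if v: "v \<in> A" for v
  proof -
    obtain x where "x \<in> VT" "v \<in> W x" using cov v AV by blast
    then show ?thesis using v by blast
  qed
  moreover have "\<exists>x\<in>VT. e \<subseteq> W x \<inter> A" if e: "e \<in> induce E A" for e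
  proof -
    obtain x where "x \<in> VT" "e \<subseteq> W x" using edg e unfolding induce_def by blast
    then show ?thesis using e unfolding induce_def by blast
  qed
  ultimately show ?thesis using T unfolding tree_decomposition_def by blast
qed

lemma treewidth_le_induce:
  assumes sg: "sgraph V E" and tw: "treewidth_le V E w" and AV: "A \<subseteq> V"
  shows "treewidth_le A (induce E A) w"
proof -
  obtain VT :: "nat set" and ET W where td: "tree_decomposition V E VT ET W"
    and bags: "\<forall>x\<in>VT. card (W x) \<le> w + 1"
    using tw unfolding treewidth_le_def by blast
  have "card (W x \<inter> A) \<le> w + 1" if "x \<in> VT" for x
  proof -
    have "W x \<subseteq> V" using td that unfolding tree_decomposition_def by blast
    moreover have "finite V" using sg unfolding sgraph_def by simp
    ultimately have "card (W x \<inter> A) \<le> card (W x)" by (meson Int_lower1 card_mono finite_subset)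
    then show ?thesis using bags that by fastforce
  qed
  then show ?thesis
    using tree_decomposition_induce[OF td AV] unfolding treewidth_le_def by blast
qed

lemma degree_Un_le: "degree (E1 \<union> E2) n \<le> degree E1 n + degree E2 n"
proof -
  have "{u. {n, u} \<in> E1 \<union> E2} = {u. {n, u} \<in> E1} \<union> {u. {n, u} \<in> E2}" by blast
  then show ?thesis unfolding degree_def by (metis card_Un_le)
qed

lemma degree_outside:
  assumes "sgraph V E" "n \<notin> V" shows "degree E n = 0"
proof -
  have "{u. {n, u} \<in> E} = {}" using sgraph_edge_in[OF assms(1)] assms(2) by blast
  then show ?thesis unfolding degree_def by simp
qed

lemma tree_partition_bag_subset: "tree_partition V E VT ET B \<Longrightarrow> x \<in> VT \<Longrightarrow> B x \<subseteq> V"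
  unfolding tree_partition_def T_partition_def by blast

lemma tree_partition_singleton: "tree_partition V E {z} {} (\<lambda>_. V)"
  unfolding tree_partition_def T_partition_def using is_tree_singleton by simp

lemma tree_partition_edge:
  assumes "z \<noteq> r" "S \<inter> N = {}"
  shows "tree_partition (S \<union> N) (induce E (S \<union> N)) {z, r} {{z, r}} (\<lambda>n. if n = z then S else N)"
proof -
  have "x = y \<or> {x, y} \<in> {{z, r}}" if "x \<in> {z, r}" "y \<in> {z, r}" for x y
    using that by (auto simp: doubleton_eq_iff)
  then show ?thesis
    unfolding tree_partition_def T_partition_def using is_tree_edge[of z r] assms by auto
qed

definition glue :: "'b set \<Rightarrow> ('b \<Rightarrow> 'a set) \<Rightarrow> 'b set \<Rightarrow> ('b \<Rightarrow> 'a set) \<Rightarrow> 'b \<Rightarrow> 'a set" where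
  "glue VT1 B1 VT2 B2 n = (if n \<in> VT1 then B1 n else {}) \<union> (if n \<in> VT2 then B2 n else {})"

lemma glue_left: "n \<in> VT1 - VT2 \<Longrightarrow> glue VT1 B1 VT2 B2 n = B1 n"
  and glue_right: "n \<in> VT2 - VT1 \<Longrightarrow> glue VT1 B1 VT2 B2 n = B2 n"
  and glue_shared: "n \<in> VT1 \<inter> VT2 \<Longrightarrow> glue VT1 B1 VT2 B2 n = B1 n \<union> B2 n"
  unfolding glue_def by auto

lemma tree_partition_glue:
  assumes TA: "tree_partition A (induce E A) VT1 ET1 B1"
    and TB: "tree_partition B (induce E B) VT2 ET2 B2"
    and int: "VT1 \<inter> VT2 = {z}" and AB: "A \<inter> B \<subseteq> B1 z \<inter> B2 z"
    and V: "V = A \<union> B" and no_edge: "\<forall>v w. {v, w} \<in> E \<longrightarrow> v \<in> A - B \<longrightarrow> w \<notin> B - A"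
  shows "tree_partition V E (VT1 \<union> VT2) (ET1 \<union> ET2) (glue VT1 B1 VT2 B2)"
proof -
  let ?B = "glue VT1 B1 VT2 B2"
  have disjA: "\<forall>x\<in>VT1. \<forall>y\<in>VT1. x \<noteq> y \<longrightarrow> B1 x \<inter> B1 y = {}" and unA: "(\<Union>x\<in>VT1. B1 x) = A"
    and edA: "\<forall>v w x y. {v, w} \<in> induce E A \<and> x \<in> VT1 \<and> y \<in> VT1 \<and> v \<in> B1 x \<and> w \<in> B1 y
      \<longrightarrow> x = y \<or> {x, y} \<in> ET1"
    using TA unfolding tree_partition_def T_partition_def by blast+
  have disjB: "\<forall>x\<in>VT2. \<forall>y\<in>VT2. x \<noteq> y \<longrightarrow> B2 x \<inter> B2 y = {}" and unB: "(\<Union>x\<in>VT2. B2 x) = B"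
    and edB: "\<forall>v w x y. {v, w} \<in> induce E B \<and> x \<in> VT2 \<and> y \<in> VT2 \<and> v \<in> B2 x \<and> w \<in> B2 y
      \<longrightarrow> x = y \<or> {x, y} \<in> ET2"
    using TB unfolding tree_partition_def T_partition_def by blast+
  have z: "z \<in> VT1" "z \<in> VT2" using int by auto
  have subA: "B1 n \<subseteq> A" if "n \<in> VT1" for n unfolding unA[symmetric] using that by blast
  have subB: "B2 n \<subseteq> B" if "n \<in> VT2" for n unfolding unB[symmetric] using that by blast
  have subV: "?B n \<subseteq> A \<union> B" for n using subA subB unfolding glue_def by auto
  have locA: "n \<in> VT1 \<and> v \<in> B1 n" if "v \<in> A" "n \<in> VT1 \<union> VT2" "v \<in> ?B n" for v n
  proof (cases "n \<in> VT1 \<and> v \<in> B1 n")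
    case False
    then have n: "n \<in> VT2" "v \<in> B2 n" using that unfolding glue_def by (auto split: if_splits)
    then have "v \<in> B1 z \<inter> B2 z" using AB subB that(1) by blast
    then have "n = z" using disjB n z by blast
    then show ?thesis using \<open>v \<in> B1 z \<inter> B2 z\<close> z by blast
  qed
  have locB: "n \<in> VT2 \<and> v \<in> B2 n" if "v \<in> B" "n \<in> VT1 \<union> VT2" "v \<in> ?B n" for v n
  proof (cases "n \<in> VT2 \<and> v \<in> B2 n")
    case False
    then have n: "n \<in> VT1" "v \<in> B1 n" using that unfolding glue_def by (auto split: if_splits)
    then have "v \<in> B1 z \<inter> B2 z" using AB subA that(1) by blast
    then have "n = z" using disjA n z by blast
    then show ?thesis using \<open>v \<in> B1 z \<inter> B2 z\<close> z by blast
  qed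
  have un: "(\<Union>n\<in>VT1 \<union> VT2. ?B n) = V"
    unfolding V unA[symmetric] unB[symmetric] glue_def by (auto split: if_splits)
  have disj: "?B x \<inter> ?B y = {}" if "x \<in> VT1 \<union> VT2" "y \<in> VT1 \<union> VT2" "x \<noteq> y" for x y
  proof (rule ccontr)
    assume "?B x \<inter> ?B y \<noteq> {}"
    then obtain v where v: "v \<in> ?B x" "v \<in> ?B y" by blast
    then have "v \<in> A \<union> B" using subV by blast
    then show False
    proof
      assume "v \<in> A"
      then have "x \<in> VT1" "y \<in> VT1" "v \<in> B1 x \<inter> B1 y" using locA that v by auto
      then show False using disjA \<open>x \<noteq> y\<close> by blast
    next
      assume "v \<in> B"
      then have "x \<in> VT2" "y \<in> VT2" "v \<in> B2 x \<inter> B2 y" using locB that v by auto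
      then show False using disjB \<open>x \<noteq> y\<close> by blast
    qed
  qed
  have ed: "x = y \<or> {x, y} \<in> ET1 \<union> ET2" if e: "{v, w} \<in> E" and x: "x \<in> VT1 \<union> VT2"
    and y: "y \<in> VT1 \<union> VT2" and vx: "v \<in> ?B x" and wy: "w \<in> ?B y" for v w x y
  proof -
    have "v \<in> V" "w \<in> V" using subV vx wy unfolding V by auto
    moreover have "{w, v} \<in> E" using e by (simp add: insert_commute)
    then have "\<not> (v \<in> A - B \<and> w \<in> B - A)" "\<not> (w \<in> A - B \<and> v \<in> B - A)"
      using no_edge e by blast+
    ultimately have "{v, w} \<subseteq> A \<or> {v, w} \<subseteq> B" using V by blast
    then show ?thesis
    proof
      assume vw: "{v, w} \<subseteq> A"
      then have "{v, w} \<in> induce E A" using e unfolding induce_def by simp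
      moreover have "x \<in> VT1 \<and> v \<in> B1 x" "y \<in> VT1 \<and> w \<in> B1 y"
        using locA[OF _ x vx] locA[OF _ y wy] vw by auto
      ultimately show ?thesis using edA[rule_format, of v w x y] by blast
    next
      assume vw: "{v, w} \<subseteq> B"
      then have "{v, w} \<in> induce E B" using e unfolding induce_def by simp
      moreover have "x \<in> VT2 \<and> v \<in> B2 x" "y \<in> VT2 \<and> w \<in> B2 y"
        using locB[OF _ x vx] locB[OF _ y wy] vw by auto
      ultimately show ?thesis using edB[rule_format, of v w x y] by blast
    qed
  qed
  have "is_tree VT1 ET1" "is_tree VT2 ET2" using TA TB unfolding tree_partition_def by simp_all
  then have "is_tree (VT1 \<union> VT2) (ET1 \<union> ET2)" using is_tree_Un[OF _ _ int] by blast
  moreover have "\<forall>x\<in>VT1 \<union> VT2. \<forall>y\<in>VT1 \<union> VT2. x \<noteq> y \<longrightarrow> ?B x \<inter> ?B y = {}"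
    by (intro ballI impI disj)
  moreover have "\<forall>v w x y. {v, w} \<in> E \<and> x \<in> VT1 \<union> VT2 \<and> y \<in> VT1 \<union> VT2 \<and> v \<in> ?B x \<and> w \<in> ?B y
      \<longrightarrow> x = y \<or> {x, y} \<in> ET1 \<union> ET2"
    by (intro allI impI, elim conjE) (rule ed)
  ultimately show ?thesis unfolding tree_partition_def T_partition_def using un
    by (intro conjI) assumption+
qed

lemma card_glue_shared:
  assumes "finite (B1 z)" "finite (B2 z)" "z \<in> VT1 \<inter> VT2" "C \<subseteq> B1 z \<inter> B2 z"
  shows "card (glue VT1 B1 VT2 B2 z) + card C \<le> card (B1 z) + card (B2 z)"
proof -
  have "card C \<le> card (B1 z \<inter> B2 z)" using assms by (simp add: card_mono)
  then show ?thesis unfolding glue_shared[OF assms(3)] using card_Un_Int[OF assms(1,2)] by simp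
qed

lemma width_le_glue:
  assumes "width_le VT1 B1 w" "width_le VT2 B2 w" "VT1 \<inter> VT2 = {z}"
    and "real (card (glue VT1 B1 VT2 B2 z)) \<le> w"
  shows "width_le (VT1 \<union> VT2) (glue VT1 B1 VT2 B2) w"
  unfolding width_le_def
proof
  fix n assume "n \<in> VT1 \<union> VT2"
  then consider "n = z" | "n \<in> VT1 - VT2" | "n \<in> VT2 - VT1" using assms(3) by blast
  then show "real (card (glue VT1 B1 VT2 B2 n)) \<le> w"
  proof cases
    case 2
    then show ?thesis using assms(1) unfolding glue_left[OF 2] width_le_def by simp
  next
    case 3
    then show ?thesis using assms(2) unfolding glue_right[OF 3] width_le_def by simp
  qed (use assms(4) in simp)
qed

lemma max_degree_le_glue:
  assumes "sgraph VT1 ET1" "sgraph VT2 ET2" "max_degree_le VT1 ET1 D" "max_degree_le VT2 ET2 D"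
    and "VT1 \<inter> VT2 = {z}" and "real (degree ET1 z + degree ET2 z) \<le> D"
  shows "max_degree_le (VT1 \<union> VT2) (ET1 \<union> ET2) D"
  unfolding max_degree_le_def
proof
  fix n assume "n \<in> VT1 \<union> VT2"
  then consider "n = z" | "n \<in> VT1" "n \<notin> VT2" | "n \<in> VT2" "n \<notin> VT1" using assms(5) by blast
  then have "real (degree ET1 n + degree ET2 n) \<le> D"
  proof cases
    case 2
    then show ?thesis using assms(3) degree_outside[OF assms(2)] unfolding max_degree_le_def by simp
  next
    case 3
    then show ?thesis using assms(4) degree_outside[OF assms(1)] unfolding max_degree_le_def by simp
  qed (use assms(6) in simp)
  then show "real (degree (ET1 \<union> ET2) n) \<le> D"
    using degree_Un_le[of ET1 ET2 n] by linarith
qed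

lemma degree_single_edge_le: "degree {{a, b}} n \<le> 1"
proof -
  have "{u. {n, u} \<in> {{a, b}}} \<subseteq> {if n = a then b else a}" by (auto simp: doubleton_eq_iff)
  then have "card {u. {n, u} \<in> {{a, b}}} \<le> card {if n = a then b else a}" by (rule card_mono[rotated]) simp
  then show ?thesis unfolding degree_def by simp
qed

lemma card_neighbourhood_le:
  assumes sg: "sgraph V E" and md: "max_degree_le V E (real d)" and SV: "S \<subseteq> V"
  shows "card {w. \<exists>v\<in>S. {v, w} \<in> E} \<le> card S * d"
proof -
  have finS: "finite S" using sg SV unfolding sgraph_def by (blast intro: finite_subset)
  have "{w. \<exists>v\<in>S. {v, w} \<in> E} = (\<Union>v\<in>S. {u. {v, u} \<in> E})" by blast
  then have "card {w. \<exists>v\<in>S. {v, w} \<in> E} \<le> (\<Sum>v\<in>S. degree E v)"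
    using card_UN_le[OF finS, of "\<lambda>v. {u. {v, u} \<in> E}"] unfolding degree_def by simp
  also have "\<dots> \<le> card S * d"
    using md SV sum_bounded_above[of S "degree E" d] unfolding max_degree_le_def by fastforce
  finally show ?thesis .
qed

lemma pad_to_card:
  assumes fin: "finite R" and NR: "N \<subseteq> R" and n: "n \<le> card R"
  shows "\<exists>M. N \<subseteq> M \<and> M \<subseteq> R \<and> card M = max (card N) n"
proof (cases "card N < n")
  case True
  have finN: "finite N" using fin NR finite_subset by blast
  have "n - card N \<le> card (R - N)" using card_Diff_subset[OF finN NR] n by simp
  then obtain T where T: "T \<subseteq> R - N" "card T = n - card N" "finite T" by (rule obtain_subset_with_card_n)
  have "card (N \<union> T) = card N + card T" using T finN by (intro card_Un_disjoint) auto
  then show ?thesis using T NR True by (intro exI[of _ "N \<union> T"]) auto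
next
  case False
  then show ?thesis using NR by (intro exI[of _ N]) auto
qed

lemma degree_insert_edge_le: "degree (insert {a, b} E) n \<le> degree E n + (if n \<in> {a, b} then 1 else 0)"
proof -
  have "degree {{a, b}} n = 0" if "n \<notin> {a, b}"
    using that unfolding degree_def by (auto simp: doubleton_eq_iff)
  then have "degree {{a, b}} n \<le> (if n \<in> {a, b} then 1 else 0)"
    using degree_single_edge_le[of a b n] by auto
  then show ?thesis using degree_Un_le[of "{{a, b}}" E n] by simp
qed

lemma tree_partition_cong:
  assumes T: "tree_partition V E VT ET B" and eq: "\<And>n. n \<in> VT \<Longrightarrow> B' n = B n"
  shows "tree_partition V E VT ET B'"
proof -
  have "(\<Union>n\<in>VT. B' n) = (\<Union>n\<in>VT. B n)" using eq by simp
  moreover have "\<forall>x\<in>VT. \<forall>y\<in>VT. x \<noteq> y \<longrightarrow> B' x \<inter> B' y = {}"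
    using T eq unfolding tree_partition_def T_partition_def by simp
  moreover have "\<forall>v w x y. {v, w} \<in> E \<and> x \<in> VT \<and> y \<in> VT \<and> v \<in> B' x \<and> w \<in> B' y
      \<longrightarrow> x = y \<or> {x, y} \<in> ET"
    using T eq unfolding tree_partition_def T_partition_def by (metis (no_types, lifting))
  ultimately show ?thesis using T unfolding tree_partition_def T_partition_def by simp
qed

lemma tree_partition_attach_leaf:
  assumes T: "tree_partition R (induce E R) VT ET B" and r: "r \<in> VT" and z: "z \<notin> VT"
    and V: "V = S \<union> R" "S \<inter> R = {}" and nb: "\<And>v w. {v, w} \<in> E \<Longrightarrow> v \<in> S \<Longrightarrow> w \<in> R \<Longrightarrow> w \<in> B r"
  shows "tree_partition V E (insert z VT) (insert {z, r} ET) (B(z := S))"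
proof -
  define N where "N = {w\<in>R. \<exists>v\<in>S. {v, w} \<in> E}"
  let ?BA = "\<lambda>n. if n = z then S else N"
  have zr: "z \<noteq> r" using r z by blast
  have NB: "N \<subseteq> B r" using nb unfolding N_def by blast
  have "S \<inter> N = {}" using V(2) unfolding N_def by blast
  note TA = tree_partition_edge[OF zr this, of E]
  have int: "{z, r} \<inter> VT = {r}" using r z by blast
  have AB: "(S \<union> N) \<inter> R \<subseteq> ?BA r \<inter> B r" using V(2) NB zr unfolding N_def by auto
  have no_edge: "\<forall>v w. {v, w} \<in> E \<longrightarrow> v \<in> S \<union> N - R \<longrightarrow> w \<notin> R - (S \<union> N)"
    unfolding N_def by blast
  have "V = S \<union> N \<union> R" using V unfolding N_def by blast
  from tree_partition_glue[OF TA T int AB this no_edge]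
  have "tree_partition V E ({z, r} \<union> VT) ({{z, r}} \<union> ET) (glue {z, r} ?BA VT B)" .
  moreover have "(B(z := S)) n = glue {z, r} ?BA VT B n" if n: "n \<in> {z, r} \<union> VT" for n
  proof -
    consider "n = z" | "n = r" | "n \<in> VT - {z, r}" using n by blast
    then show ?thesis using z r zr NB unfolding glue_def by cases auto
  qed
  ultimately have "tree_partition V E ({z, r} \<union> VT) ({{z, r}} \<union> ET) (B(z := S))"
    by (rule tree_partition_cong)
  moreover have "{z, r} \<union> VT = insert z VT" "{{z, r}} \<union> ET = insert {z, r} ET" using r by auto
  ultimately show ?thesis by simp
qed

locale partition_bounds =
  fixes k d :: nat and \<alpha> :: real
  assumes k_pos: "k \<ge> 1" and d_pos: "d \<ge> 1" and alpha_gt_2: "\<alpha> > 2"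
begin

definition root_bag_bound :: "real \<Rightarrow> real" where
  "root_bag_bound s = (\<alpha> - 1) / (\<alpha> - 2) * s - \<alpha> / (\<alpha> - 2) * k"

definition root_degree_bound :: "real \<Rightarrow> real" where
  "root_degree_bound s = 1 / ((\<alpha> - 2) * k) * s - 2 / (\<alpha> - 2)"

abbreviation width_bound :: real where
  "width_bound \<equiv> root_bag_bound (3 * \<alpha> * k * d)"

abbreviation degree_bound :: real where
  "degree_bound \<equiv> root_degree_bound (3 * \<alpha> * k * d) + 1"

lemma alpha_k_gt_2k: "\<alpha> * k > 2 * k"
  using alpha_gt_2 k_pos by simp

lemma alpha_k_le_alpha_k_d: "\<alpha> * k \<le> \<alpha> * k * d"
proof -
  have "\<alpha> * k * 1 \<le> \<alpha> * k * d" using alpha_gt_2 d_pos by (intro mult_left_mono) auto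
  then show ?thesis by simp
qed

lemma k_le_alpha_k_d: "real k \<le> \<alpha> * k * d"
  using alpha_k_gt_2k alpha_k_le_alpha_k_d by linarith

lemma alpha_k_le: "\<alpha> * k + 1 \<le> 3 * \<alpha> * k * d"
  using alpha_k_gt_2k alpha_k_le_alpha_k_d k_pos by linarith

lemma root_bag_bound_scaled: "(\<alpha> - 2) * root_bag_bound s = (\<alpha> - 1) * s - \<alpha> * k"
proof -
  have "\<alpha> - 2 \<noteq> 0" using alpha_gt_2 by simp
  then have "(\<alpha> - 2) * ((\<alpha> - 1) / (\<alpha> - 2) * s) = (\<alpha> - 1) * s"
    and "(\<alpha> - 2) * (\<alpha> / (\<alpha> - 2) * k) = \<alpha> * k" by simp_all
  then show ?thesis unfolding root_bag_bound_def by (simp add: right_diff_distrib)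
qed

lemma root_degree_bound_scaled: "((\<alpha> - 2) * k) * root_degree_bound s = s - 2 * k"
proof -
  have "(\<alpha> - 2) * k \<noteq> 0" using alpha_gt_2 k_pos by auto
  then have "((\<alpha> - 2) * k) * (1 / ((\<alpha> - 2) * k) * s) = s"
    and "((\<alpha> - 2) * k) * (2 / (\<alpha> - 2)) = 2 * k" by (simp_all add: field_simps)
  then show ?thesis unfolding root_degree_bound_def by (simp add: right_diff_distrib)
qed

lemma root_bag_bound_mono: "s \<le> t \<Longrightarrow> root_bag_bound s \<le> root_bag_bound t"
  unfolding root_bag_bound_def using alpha_gt_2 by (simp add: divide_right_mono mult_left_mono)

lemma root_degree_bound_mono: "s \<le> t \<Longrightarrow> root_degree_bound s \<le> root_degree_bound t"
  unfolding root_degree_bound_def using alpha_gt_2 k_pos by (simp add: divide_right_mono)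

lemma le_root_bag_bound:
  assumes "\<alpha> * k \<le> s" shows "s \<le> root_bag_bound s"
proof -
  have "(\<alpha> - 2) * s \<le> (\<alpha> - 2) * root_bag_bound s"
    unfolding root_bag_bound_scaled using assms by (simp add: algebra_simps)
  then show ?thesis using alpha_gt_2 by simp
qed

lemma one_le_root_degree_bound:
  assumes "\<alpha> * k \<le> s" shows "1 \<le> root_degree_bound s"
proof -
  have "((\<alpha> - 2) * k) * 1 \<le> ((\<alpha> - 2) * k) * root_degree_bound s"
    unfolding root_degree_bound_scaled using assms by (simp add: algebra_simps)
  moreover have "(\<alpha> - 2) * k > 0" using alpha_gt_2 k_pos by simp
  ultimately show ?thesis by (rule mult_left_le_imp_le)
qed

lemma root_bag_bound_glue:
  fixes sa sb s x :: real
  assumes "sa + sb \<le> s + 2 * x" "x \<le> k"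
  shows "root_bag_bound sa + root_bag_bound sb - x \<le> root_bag_bound s"
proof -
  have "(\<alpha> - 2) * (root_bag_bound sa + root_bag_bound sb - x)
      = (\<alpha> - 1) * (sa + sb) - 2 * \<alpha> * k - (\<alpha> - 2) * x"
    using root_bag_bound_scaled[of sa] root_bag_bound_scaled[of sb] by (simp add: algebra_simps)
  also have "\<dots> \<le> (\<alpha> - 1) * (s + 2 * x) - 2 * \<alpha> * k - (\<alpha> - 2) * x"
    using assms(1) alpha_gt_2 by (simp add: mult_left_mono)
  also have "\<dots> \<le> (\<alpha> - 2) * root_bag_bound s"
    unfolding root_bag_bound_scaled using assms(2) alpha_gt_2 by (simp add: algebra_simps mult_left_mono)
  finally show ?thesis using alpha_gt_2 by simp
qed

lemma root_degree_bound_glue: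
  fixes sa sb s x :: real
  assumes "sa + sb \<le> s + 2 * x" "x \<le> k"
  shows "root_degree_bound sa + root_degree_bound sb \<le> root_degree_bound s"
proof -
  have "((\<alpha> - 2) * k) * (root_degree_bound sa + root_degree_bound sb) \<le> ((\<alpha> - 2) * k) * root_degree_bound s"
    unfolding distrib_left root_degree_bound_scaled using assms by simp
  moreover have "(\<alpha> - 2) * k > 0" using alpha_gt_2 k_pos by simp
  ultimately show ?thesis by (rule mult_left_le_imp_le)
qed

lemma separator_side_bounds:
  fixes a b c x s :: real
  assumes "3 * a \<le> 2 * s" "3 * b \<le> 2 * s" "a + b + c = s" "c \<le> x" "x \<le> k"
    and "3 * \<alpha> * k < s" "s \<le> 3 * \<alpha> * k * d"
  shows "\<alpha> * k \<le> a + x" "a + x \<le> 3 * \<alpha> * k * d"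
  using assms k_le_alpha_k_d by linarith+

text \<open>F is a finite set of node names the partition must avoid, so that partitions built for
  different subgraphs can be glued along a single common node.\<close>

definition rooted_tree_partition ::
    "'a set \<Rightarrow> 'a set set \<Rightarrow> 'a set \<Rightarrow> nat set \<Rightarrow> nat \<Rightarrow> nat set \<Rightarrow> nat set set \<Rightarrow> (nat \<Rightarrow> 'a set) \<Rightarrow> bool" where
  "rooted_tree_partition V E S F z VT ET B \<longleftrightarrow> tree_partition V E VT ET B \<and> VT \<inter> F = {} \<and> z \<in> VT
     \<and> width_le VT B width_bound \<and> max_degree_le VT ET degree_bound
     \<and> S \<subseteq> B z \<and> real (card (B z)) \<le> root_bag_bound (card S) \<and> real (degree ET z) \<le> root_degree_bound (card S)"

lemma width_bound_ge: "3 * \<alpha> * k * d \<le> width_bound"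
  using le_root_bag_bound alpha_k_le by simp

lemma degree_bound_ge: "2 \<le> degree_bound"
  using one_le_root_degree_bound alpha_k_le by simp

lemma partition_rooted_at_superset:
  assumes IH: "\<And>S' F' z'. S' \<subseteq> R \<Longrightarrow> \<alpha> * k \<le> card S' \<Longrightarrow> card S' \<le> 3 * \<alpha> * k * d \<Longrightarrow>
      finite F' \<Longrightarrow> z' \<notin> F' \<Longrightarrow> \<exists>VT ET B. rooted_tree_partition R ER S' F' z' VT ET B"
    and finR: "finite R" and NR: "N \<subseteq> R" and N: "card N \<le> 3 * \<alpha> * k * d" and F: "finite F" "r \<notin> F"
  shows "\<exists>(VT :: nat set) ET B. tree_partition R ER VT ET B \<and> VT \<inter> F = {} \<and> r \<in> VT
    \<and> width_le VT B width_bound \<and> max_degree_le VT ET degree_bound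
    \<and> N \<subseteq> B r \<and> degree ET r \<le> root_degree_bound (3 * \<alpha> * k * d)"
proof -
  define n0 where "n0 = nat \<lceil>\<alpha> * k\<rceil>"
  have n0: "\<alpha> * k \<le> n0" "n0 \<le> 3 * \<alpha> * k * d"
    using alpha_k_gt_2k alpha_k_le unfolding n0_def by linarith+
  show ?thesis
  proof (cases "card R < n0")
    case True
    \<comment> \<open>too small to recurse into: a single bag\<close>
    then have "width_le {r} (\<lambda>_. R) width_bound" using n0 width_bound_ge unfolding width_le_def by simp
    moreover have "max_degree_le {r} {} degree_bound" "degree {} r = 0"
      using degree_bound_ge unfolding max_degree_le_def degree_def by simp_all
    moreover have "0 \<le> root_degree_bound (3 * \<alpha> * k * d)" using degree_bound_ge by simp
    ultimately show ?thesis using tree_partition_singleton[of R ER r] F(2) NR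
      by (intro exI[where x = "{r}"] exI[where x = "{}"] exI[where x = "\<lambda>_. R"]) simp
  next
    case False
    then obtain M where M: "N \<subseteq> M" "M \<subseteq> R" "card M = max (card N) n0"
      using pad_to_card[OF finR NR, of n0] by auto
    have M_size: "\<alpha> * k \<le> card M" "card M \<le> 3 * \<alpha> * k * d" using M(3) n0 N by (auto simp: max_def)
    obtain VT ET B where "rooted_tree_partition R ER M F r VT ET B"
      using IH[OF M(2) M_size F] by blast
    then show ?thesis using M(1) root_degree_bound_mono[OF M_size(2)]
      unfolding rooted_tree_partition_def by (intro exI[where x = VT] exI[where x = ET] exI[where x = B]) auto
  qed
qed

lemma rooted_tree_partition_leaf:
  assumes sg: "sgraph V E" and md: "max_degree_le V E (real d)" and SV: "S \<subseteq> V"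
    and S: "\<alpha> * k \<le> card S" "card S \<le> 3 * \<alpha> * k" and F: "finite F" "z \<notin> F"
    and IH: "\<And>S' F' z'. S' \<subseteq> V - S \<Longrightarrow> \<alpha> * k \<le> card S' \<Longrightarrow> card S' \<le> 3 * \<alpha> * k * d \<Longrightarrow>
      finite F' \<Longrightarrow> z' \<notin> F' \<Longrightarrow> \<exists>VT ET B. rooted_tree_partition (V - S) (induce E (V - S)) S' F' z' VT ET B"
  shows "\<exists>VT ET B. rooted_tree_partition V E S F z VT ET B"
proof -
  define N where "N = {w\<in>V - S. \<exists>v\<in>S. {v, w} \<in> E}"
  have "finite V" using sg unfolding sgraph_def by simp
  have "{w. \<exists>v\<in>S. {v, w} \<in> E} \<subseteq> V" using sgraph_edge_in[OF sg] by blast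
  then have "card N \<le> card {w. \<exists>v\<in>S. {v, w} \<in> E}"
    using \<open>finite V\<close> unfolding N_def by (intro card_mono) (auto intro: finite_subset)
  then have "card N \<le> card S * d" using card_neighbourhood_le[OF sg md SV] by linarith
  then have "real (card N) \<le> card S * d" by (metis of_nat_mono of_nat_mult)
  also have "\<dots> \<le> 3 * \<alpha> * k * d" using S(2) by (simp add: mult_right_mono)
  finally have N: "card N \<le> 3 * \<alpha> * k * d" .
  obtain r where r: "r \<notin> insert z F" using ex_new_if_finite[OF infinite_UNIV_nat] F(1) by blast
  obtain VT ET B where T: "tree_partition (V - S) (induce E (V - S)) VT ET B" "VT \<inter> insert z F = {}"
    "r \<in> VT" "width_le VT B width_bound" "max_degree_le VT ET degree_bound" "N \<subseteq> B r"
    "degree ET r \<le> root_degree_bound (3 * \<alpha> * k * d)"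
    using partition_rooted_at_superset[OF IH _ _ N, of "insert z F" r] \<open>finite V\<close> F(1) r
    unfolding N_def by blast
  have z: "z \<notin> VT" using T(2) by blast
  have "V = S \<union> (V - S)" "S \<inter> (V - S) = {}" using SV by auto
  moreover have "\<And>v w. {v, w} \<in> E \<Longrightarrow> v \<in> S \<Longrightarrow> w \<in> V - S \<Longrightarrow> w \<in> B r"
    using T(6) unfolding N_def by blast
  ultimately have "tree_partition V E (insert z VT) (insert {z, r} ET) (B(z := S))"
    by (rule tree_partition_attach_leaf[OF T(1,3) z])
  moreover have "width_le (insert z VT) (B(z := S)) width_bound"
  proof -
    have "real (card S) \<le> width_bound" using S(2) alpha_k_le_alpha_k_d width_bound_ge by linarith
    then show ?thesis using T(4) unfolding width_le_def by simp
  qed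
  moreover have root_degree: "degree (insert {z, r} ET) z \<le> 1"
  proof -
    have "sgraph VT ET" using T(1) unfolding tree_partition_def is_tree_def by blast
    then show ?thesis using degree_insert_edge_le[of z r ET z] degree_outside[OF _ z] by simp
  qed
  moreover have "max_degree_le (insert z VT) (insert {z, r} ET) degree_bound"
    unfolding max_degree_le_def
  proof
    fix n assume n: "n \<in> insert z VT"
    have "real (degree (insert {z, r} ET) n) \<le> real (degree ET n + (if n \<in> {z, r} then 1 else 0))"
      by (rule of_nat_mono[OF degree_insert_edge_le])
    moreover have "real (degree ET n) \<le> degree_bound" if "n \<in> VT" using T(5) that unfolding max_degree_le_def by blast
    ultimately show "real (degree (insert {z, r} ET) n) \<le> degree_bound"
      using n T(7) root_degree degree_bound_ge by (cases "n = z"; cases "n = r") auto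
  qed
  moreover have "insert z VT \<inter> F = {}" using T(2) F(2) by blast
  ultimately show ?thesis using le_root_bag_bound[OF S(1)] one_le_root_degree_bound[OF S(1)] root_degree
    unfolding rooted_tree_partition_def
    by (intro exI[where x = "insert z VT"] exI[where x = "insert {z, r} ET"] exI[where x = "B(z := S)"]) simp
qed

lemma rooted_tree_partition_glue:
  assumes TA: "rooted_tree_partition A (induce E A) SA F z VT1 ET1 B1"
    and TB: "rooted_tree_partition B (induce E B) SB F' z VT2 ET2 B2"
    and FF: "F \<subseteq> F'" and int: "VT1 \<inter> VT2 = {z}" and AB: "A \<inter> B \<subseteq> SA \<inter> SB"
    and V: "V = A \<union> B" and no_edge: "\<forall>v w. {v, w} \<in> E \<longrightarrow> v \<in> A - B \<longrightarrow> w \<notin> B - A"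
    and finV: "finite V" and S: "S \<subseteq> SA \<union> SB" "card SA + card SB \<le> card S + 2 * card (A \<inter> B)"
    "card (A \<inter> B) \<le> k" "card S \<le> 3 * \<alpha> * k * d"
  shows "rooted_tree_partition V E S F z (VT1 \<union> VT2) (ET1 \<union> ET2) (glue VT1 B1 VT2 B2)"
proof -
  let ?x = "card (A \<inter> B)"
  have T1: "tree_partition A (induce E A) VT1 ET1 B1" "VT1 \<inter> F = {}" "z \<in> VT1"
    "width_le VT1 B1 width_bound" "max_degree_le VT1 ET1 degree_bound" "SA \<subseteq> B1 z"
    "card (B1 z) \<le> root_bag_bound (card SA)" "degree ET1 z \<le> root_degree_bound (card SA)"
    using TA unfolding rooted_tree_partition_def by auto
  have T2: "tree_partition B (induce E B) VT2 ET2 B2" "VT2 \<inter> F' = {}" "z \<in> VT2"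
    "width_le VT2 B2 width_bound" "max_degree_le VT2 ET2 degree_bound" "SB \<subseteq> B2 z"
    "card (B2 z) \<le> root_bag_bound (card SB)" "degree ET2 z \<le> root_degree_bound (card SB)"
    using TB unfolding rooted_tree_partition_def by auto
  have sizes: "real (card SA) + card SB \<le> card S + 2 * real ?x" "real ?x \<le> k"
    using S(2,3) by (metis of_nat_add of_nat_mono of_nat_mult of_nat_numeral)+
  have "finite (B1 z)" "finite (B2 z)"
    using tree_partition_bag_subset[OF T1(1,3)] tree_partition_bag_subset[OF T2(1,3)] finV V
    by (auto intro: finite_subset)
  then have "real (card (glue VT1 B1 VT2 B2 z)) + ?x \<le> card (B1 z) + card (B2 z)"
    using card_glue_shared[of B1 z B2 VT1 VT2 "A \<inter> B"] int AB T1(6) T2(6) by fastforce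
  also have "\<dots> \<le> root_bag_bound (card SA) + root_bag_bound (card SB)" using T1(7) T2(7) by simp
  finally have root_bag: "real (card (glue VT1 B1 VT2 B2 z)) \<le> root_bag_bound (card S)"
    using root_bag_bound_glue[OF sizes] by simp
  have "real (degree ET1 z + degree ET2 z) \<le> root_degree_bound (card SA) + root_degree_bound (card SB)"
    using T1(8) T2(8) by simp
  also have "\<dots> \<le> root_degree_bound (card S)" using root_degree_bound_glue[OF sizes] .
  finally have root_degree: "real (degree ET1 z + degree ET2 z) \<le> root_degree_bound (card S)" .
  have "root_bag_bound (card S) \<le> width_bound" "root_degree_bound (card S) \<le> degree_bound"
    using root_bag_bound_mono[OF S(4)] root_degree_bound_mono[OF S(4)] by simp_all
  moreover have "sgraph VT1 ET1" "sgraph VT2 ET2"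
    using T1(1) T2(1) unfolding tree_partition_def is_tree_def by simp_all
  moreover have "real (degree (ET1 \<union> ET2) z) \<le> root_degree_bound (card S)"
    using degree_Un_le[of ET1 ET2 z] root_degree by (meson of_nat_mono order_trans)
  moreover have "S \<subseteq> glue VT1 B1 VT2 B2 z" using S(1) T1(6) T2(6) glue_shared[of z VT1 VT2 B1 B2] int by auto
  moreover have "tree_partition V E (VT1 \<union> VT2) (ET1 \<union> ET2) (glue VT1 B1 VT2 B2)"
    using tree_partition_glue[OF T1(1) T2(1) int _ V no_edge] AB T1(6) T2(6) by blast
  ultimately show ?thesis
    using width_le_glue[OF T1(4) T2(4) int] max_degree_le_glue[OF _ _ T1(5) T2(5) int] root_bag root_degree
      T1(2,3) T2(2) FF unfolding rooted_tree_partition_def by auto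
qed

lemma rooted_tree_partition_split:
  assumes sg: "sgraph V E" and tw: "treewidth_le V E (k - 1)" and SV: "S \<subseteq> V"
    and S: "3 * \<alpha> * k < card S" "card S \<le> 3 * \<alpha> * k * d" and F: "finite F" "z \<notin> F"
    and IH: "\<And>A S' F' z'. A \<subset> V \<Longrightarrow> S' \<subseteq> A \<Longrightarrow> \<alpha> * k \<le> card S' \<Longrightarrow> card S' \<le> 3 * \<alpha> * k * d \<Longrightarrow>
      finite F' \<Longrightarrow> z' \<notin> F' \<Longrightarrow> \<exists>VT ET B. rooted_tree_partition A (induce E A) S' F' z' VT ET B"
  shows "\<exists>VT ET B. rooted_tree_partition V E S F z VT ET B"
proof -
  obtain VT0 :: "nat set" and ET0 W where td: "tree_decomposition V E VT0 ET0 W"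
    and "\<forall>x\<in>VT0. card (W x) \<le> k - 1 + 1" using tw unfolding treewidth_le_def by blast
  then have "\<forall>x\<in>VT0. card (W x) \<le> k" using k_pos by simp
  from balanced_separator[OF sg td this SV] obtain X P Q where X: "X \<subseteq> V" "card X \<le> k" and V: "P \<union> Q \<union> X = V"
    and disj: "P \<inter> Q = {}" "P \<inter> X = {}" "Q \<inter> X = {}"
    and no_edge: "\<forall>v w. {v, w} \<in> E \<longrightarrow> v \<in> P \<longrightarrow> w \<notin> Q"
    and sides: "3 * card (S \<inter> P) \<le> 2 * card S" "3 * card (S \<inter> Q) \<le> 2 * card S"
    by (elim exE conjE) (rule that)
  define SA where "SA = S \<inter> P \<union> X"
  define SB where "SB = S \<inter> Q \<union> X"
  have "finite V" using sg unfolding sgraph_def by simp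
  then have fin: "finite S" "finite X" using finite_subset[OF SV] finite_subset[OF X(1)] by simp_all
  have "card (S \<inter> P \<union> S \<inter> Q) = card (S \<inter> P) + card (S \<inter> Q)"
    using fin disj by (intro card_Un_disjoint) auto
  moreover have "card (S \<inter> P \<union> S \<inter> Q \<union> S \<inter> X) = card (S \<inter> P \<union> S \<inter> Q) + card (S \<inter> X)"
    using fin disj by (intro card_Un_disjoint) auto
  moreover have "S \<inter> P \<union> S \<inter> Q \<union> S \<inter> X = S" using SV V by blast
  ultimately have parts: "card (S \<inter> P) + card (S \<inter> Q) + card (S \<inter> X) = card S" by simp
  have "card (S \<inter> X) \<le> card X" using fin by (simp add: card_mono)
  have card_SA: "card SA = card (S \<inter> P) + card X" and card_SB: "card SB = card (S \<inter> Q) + card X"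
    unfolding SA_def SB_def using fin disj by (simp_all add: card_Un_disjoint Int_Un_distrib2 Int_assoc
        Int_commute[of X])
  have real_facts: "3 * real (card (S \<inter> P)) \<le> 2 * real (card S)" "3 * real (card (S \<inter> Q)) \<le> 2 * real (card S)"
    "real (card (S \<inter> P)) + real (card (S \<inter> Q)) + real (card (S \<inter> X)) = real (card S)"
    "real (card (S \<inter> X)) \<le> real (card X)" "real (card X) \<le> real k"
    using sides parts \<open>card (S \<inter> X) \<le> card X\<close> X(2) by (simp_all flip: of_nat_add of_nat_mult of_nat_le_iff)
  have size_A: "\<alpha> * k \<le> card SA" "card SA \<le> 3 * \<alpha> * k * d"
    using separator_side_bounds[OF real_facts(1,2,3,4,5) S] unfolding card_SA by simp_all
  have size_B: "\<alpha> * k \<le> card SB" "card SB \<le> 3 * \<alpha> * k * d"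
    using separator_side_bounds[OF real_facts(2,1) _ real_facts(4,5) S] real_facts(3)
    unfolding card_SB by (simp_all add: algebra_simps)
  \<comment> \<open>each side keeps more than k \<ge> |X| vertices of S, so both parts are proper subgraphs\<close>
  have "real (card (S \<inter> Q)) > 0" "real (card (S \<inter> P)) > 0"
    using size_A(1) size_B(1) real_facts(5) alpha_k_gt_2k k_pos unfolding card_SA card_SB by linarith+
  then obtain q p where "q \<in> S \<inter> Q" "p \<in> S \<inter> P" by (metis all_not_in_conv card.empty of_nat_0 less_irrefl)
  then have proper: "P \<union> X \<subset> V" "Q \<union> X \<subset> V" using V disj SV by blast+
  obtain VT1 ET1 B1 where T1: "rooted_tree_partition (P \<union> X) (induce E (P \<union> X)) SA F z VT1 ET1 B1"
    using IH[OF proper(1) _ size_A F] unfolding SA_def by blast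
  define F' where "F' = F \<union> (VT1 - {z})"
  have "finite VT1"
    using T1 unfolding rooted_tree_partition_def tree_partition_def is_tree_def sgraph_def by blast
  then have "finite F'" "z \<notin> F'" using F unfolding F'_def by auto
  then obtain VT2 ET2 B2 where T2: "rooted_tree_partition (Q \<union> X) (induce E (Q \<union> X)) SB F' z VT2 ET2 B2"
    using IH[OF proper(2) _ size_B] unfolding SB_def by blast
  have "z \<in> VT1" "z \<in> VT2" "VT2 \<inter> F' = {}" using T1 T2 unfolding rooted_tree_partition_def by auto
  then have int: "VT1 \<inter> VT2 = {z}" unfolding F'_def by blast
  have AB: "(P \<union> X) \<inter> (Q \<union> X) = X" using disj by blast
  have "card SA + card SB \<le> card S + 2 * card ((P \<union> X) \<inter> (Q \<union> X))"
    unfolding card_SA card_SB AB using parts by linarith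
  moreover have "(P \<union> X) \<inter> (Q \<union> X) \<subseteq> SA \<inter> SB" "V = P \<union> X \<union> (Q \<union> X)" "S \<subseteq> SA \<union> SB"
    using V SV unfolding AB SA_def SB_def by blast+
  moreover have "\<forall>v w. {v, w} \<in> E \<longrightarrow> v \<in> P \<union> X - (Q \<union> X) \<longrightarrow> w \<notin> Q \<union> X - (P \<union> X)"
    using no_edge by blast
  moreover have "F \<subseteq> F'" "card ((P \<union> X) \<inter> (Q \<union> X)) \<le> k" using X(2) unfolding F'_def AB by auto
  ultimately show ?thesis
    using rooted_tree_partition_glue[OF T1 T2 _ int, of V S] \<open>finite V\<close> S(2) by blast
qed

lemma rooted_tree_partition_exists:
  assumes "sgraph V E" "treewidth_le V E (k - 1)" "max_degree_le V E (real d)" "S \<subseteq> V"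
    and "\<alpha> * k \<le> card S" "card S \<le> 3 * \<alpha> * k * d" "finite F" "z \<notin> F"
  shows "\<exists>VT ET B. rooted_tree_partition V E S F z VT ET B"
  using assms
proof (induction "card V" arbitrary: V E S F z rule: less_induct)
  case less
  have sg: "sgraph V E" and tw: "treewidth_le V E (k - 1)" and md: "max_degree_le V E (real d)"
    and SV: "S \<subseteq> V" and F: "finite F" "z \<notin> F" using less.prems by auto
  have IH: "\<exists>VT ET B. rooted_tree_partition A (induce E A) S' F' z' VT ET B"
    if A: "A \<subset> V" and "S' \<subseteq> A" "\<alpha> * k \<le> card S'" "card S' \<le> 3 * \<alpha> * k * d" "finite F'" "z' \<notin> F'"
    for A S' F' z'
  proof -
    have "finite V" using sg unfolding sgraph_def by simp
    then have "card A < card V" using A by (rule psubset_card_mono)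
    moreover have "A \<subseteq> V" using A by blast
    ultimately show ?thesis using less.hyps sgraph_induce[OF sg] treewidth_le_induce[OF sg tw]
        max_degree_le_induce[OF sg md] that(2-) by blast
  qed
  show ?case
  proof (cases "card S \<le> 3 * \<alpha> * k")
    case True
    have "real (card S) > 0" using less.prems(5) alpha_k_gt_2k k_pos by linarith
    then have "S \<noteq> {}" by auto
    then have "V - S \<subset> V" using SV by blast
    then show ?thesis
      using rooted_tree_partition_leaf[OF sg md SV less.prems(5) True F] IH by blast
  next
    case False
    then show ?thesis using rooted_tree_partition_split[OF sg tw SV _ less.prems(6) F IH] by simp
  qed
qed

lemma width_bound_eq: "width_bound = 3 * \<alpha> * (\<alpha> - 1) / (\<alpha> - 2) * k * d - \<alpha> / (\<alpha> - 2) * k"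
  unfolding root_bag_bound_def by simp

lemma degree_bound_eq: "degree_bound = 3 * \<alpha> / (\<alpha> - 2) * d + (\<alpha> - 4) / (\<alpha> - 2)"
proof -
  have "\<alpha> - 2 \<noteq> 0" "real k \<noteq> 0" using alpha_gt_2 k_pos by auto
  then have "1 / ((\<alpha> - 2) * k) * (3 * \<alpha> * k * d) = 3 * \<alpha> / (\<alpha> - 2) * d"
    and "1 - 2 / (\<alpha> - 2) = (\<alpha> - 4) / (\<alpha> - 2)" by (simp_all add: field_simps)
  then show ?thesis unfolding root_degree_bound_def by simp
qed

lemma tree_partition_rooted_at:
  assumes "sgraph V E" "treewidth_le V E (k - 1)" "max_degree_le V E (real d)"
    and "S \<subseteq> V" "\<alpha> * k \<le> card S" "card S \<le> 3 * \<alpha> * k * d"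
  shows "\<exists>(VT :: nat set) ET B. tree_partition V E VT ET B
    \<and> width_le VT B (3 * \<alpha> * (\<alpha> - 1) / (\<alpha> - 2) * k * d - \<alpha> / (\<alpha> - 2) * k)
    \<and> max_degree_le VT ET (3 * \<alpha> / (\<alpha> - 2) * d + (\<alpha> - 4) / (\<alpha> - 2))
    \<and> (\<exists>z\<in>VT. S \<subseteq> B z
         \<and> real (card (B z)) \<le> (\<alpha> - 1) / (\<alpha> - 2) * card S - \<alpha> / (\<alpha> - 2) * k
         \<and> real (degree ET z) \<le> 1 / ((\<alpha> - 2) * k) * card S - 2 / (\<alpha> - 2))"
proof -
  obtain VT ET B where "rooted_tree_partition V E S {} 0 VT ET B"
    using rooted_tree_partition_exists[OF assms, of "{}" 0] by blast
  then show ?thesis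
    unfolding rooted_tree_partition_def width_bound_eq degree_bound_eq
    unfolding root_bag_bound_def root_degree_bound_def by blast
qed

lemma tree_partition_bounded:
  assumes sg: "sgraph V E" and tw: "treewidth_le V E (k - 1)" and md: "max_degree_le V E (real d)"
  shows "\<exists>(VT :: nat set) ET B. tree_partition V E VT ET B
    \<and> width_le VT B (3 * \<alpha> * (\<alpha> - 1) / (\<alpha> - 2) * k * d - \<alpha> / (\<alpha> - 2) * k)
    \<and> max_degree_le VT ET (3 * \<alpha> / (\<alpha> - 2) * d + (\<alpha> - 4) / (\<alpha> - 2))"
proof -
  define n0 where "n0 = nat \<lceil>\<alpha> * k\<rceil>"
  have n0: "\<alpha> * k \<le> n0" "n0 \<le> 3 * \<alpha> * k * d"
    using alpha_k_gt_2k alpha_k_le unfolding n0_def by linarith+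
  show ?thesis
  proof (cases "n0 \<le> card V")
    case True
    then obtain S where "S \<subseteq> V" "card S = n0" by (meson obtain_subset_with_card_n)
    then show ?thesis using tree_partition_rooted_at[OF sg tw md, of S] n0 by auto
  next
    case False
    then have "width_le {0 :: nat} (\<lambda>_. V) width_bound" using n0 width_bound_ge unfolding width_le_def by simp
    moreover have "max_degree_le {0 :: nat} {} degree_bound"
      using degree_bound_ge unfolding max_degree_le_def degree_def by simp
    ultimately show ?thesis using tree_partition_singleton[of V E 0]
      unfolding width_bound_eq degree_bound_eq by blast
  qed
qed

end

theorem lemma5:
  fixes V :: "'a set" and E :: "'a set set" and k d :: nat and \<alpha> :: real
  assumes "k \<ge> 1" and "d \<ge> 1" and "\<alpha> > 2"
    and "sgraph V E"
    and "treewidth_le V E (k - 1)"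
    and "max_degree_le V E (real d)"
  shows "(\<exists>(VT :: nat set) ET B. tree_partition V E VT ET B
            \<and> width_le VT B (3 * \<alpha> * (\<alpha> - 1) / (\<alpha> - 2) * k * d - \<alpha> / (\<alpha> - 2) * k)
            \<and> max_degree_le VT ET (3 * \<alpha> / (\<alpha> - 2) * d + (\<alpha> - 4) / (\<alpha> - 2)))
       \<and> (\<forall>S. S \<subseteq> V \<and> \<alpha> * k \<le> real (card S) \<and> real (card S) \<le> 3 * \<alpha> * k * d \<longrightarrow>
            (\<exists>(VT :: nat set) ET B. tree_partition V E VT ET B
              \<and> width_le VT B (3 * \<alpha> * (\<alpha> - 1) / (\<alpha> - 2) * k * d - \<alpha> / (\<alpha> - 2) * k)
              \<and> max_degree_le VT ET (3 * \<alpha> / (\<alpha> - 2) * d + (\<alpha> - 4) / (\<alpha> - 2))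
              \<and> (\<exists>z\<in>VT. S \<subseteq> B z
                   \<and> real (card (B z)) \<le> (\<alpha> - 1) / (\<alpha> - 2) * card S - \<alpha> / (\<alpha> - 2) * k
                   \<and> real (degree ET z) \<le> 1 / ((\<alpha> - 2) * k) * card S - 2 / (\<alpha> - 2))))"
proof -
  interpret partition_bounds k d \<alpha> using assms(1-3) by unfold_locales
  show ?thesis using tree_partition_bounded[OF assms(4-6)] tree_partition_rooted_at[OF assms(4-6)] by blast
qed

end
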